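(* Let $H=L^2(\lambda_{(0,1)};\mathbb R)$ with inner product $\langle\cdot,\cdot\rangle_H$ and norm $\|\cdot\|_H$; let $\beta\in(\tfrac18,\tfrac12)$, $T,\eta\in(0,\infty)$, $\kappa\in\mathbb R$, $\varrho\in(\tfrac1{16},\tfrac\beta2)$, $\chi\in(0,\tfrac\varrho2-\tfrac1{32}]$; let $e_0\equiv1$, $e_n(x)=\sqrt2\cos(2n\pi x)$, $e_{-n}(x)=\sqrt2\sin(2n\pi x)$ ($n\in\mathbb N$); let $\lambda_k=16k^4\pi^4-4k^2\pi^2+\eta$ ($k\in\mathbb Z$); let $(b_k),(\tilde b_k)\subseteq\mathbb R$ with $\sum_{m\in\mathbb Z}(|b_m|^2+|\tilde b_m|^2)|m|^{4\beta-4}<\infty$; let $A$ be given by $D(A)=\{v\in H\colon\sum_k|\lambda_k\langle e_k,v\rangle_H|^2<\infty\}$, $Av=\sum_k-\lambda_k\langle e_k,v\rangle_He_k$, with interpolation spaces $(H_r)_{r\in\mathbb R}$ associated to $-A$; let $\xi\in H_{1/4}$; let $(\Omega,\mathcal F,\mathbb P)$ be a probability space with normal filtration $(\mathcal F_t)_{t\in[0,T]}$ and $\mathrm{Id}_H$-cylindrical Wiener process $(W_t)_{t\in[0,T]}$; let $F\colon H_{1/16}\to H_{-1/4}$, $F(v)=\eta v-\tfrac\kappa2(v^2)'$; let $B\colon H\to H_{-1}$, $Bv=\sum_k(b_k\langle e_k,v\rangle_H+\tilde b_k\langle e_{-k},v\rangle_H)e_k$; let $(h_n)\subseteq(0,\infty)$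 with $\limsup h_n=0$; let $P_nv=\sum_{k=-n}^n\langle e_k,v\rangle_He_k$; and let $\mathcal X^n,\mathcal O^n\colon[0,T]\times\Omega\to P_n(H)$ be stochastic processes with $\mathcal O^n_t=\int_0^tP_ne^{(t-s)A}B\,dW_s$ $\mathbb P$-a.s. and $\mathbb P\big(\mathcal X^n_t=P_ne^{tA}\xi+\int_0^tP_ne^{(t-s)A}\mathbb 1_{\{\|\mathcal X^n_{\lfloor s\rfloor_{h_n}}\|_{H_\varrho}+\|\mathcal O^n_{\lfloor s\rfloor_{h_n}}+P_ne^{\lfloor s\rfloor_{h_n}A}\xi\|_{H_\varrho}\le|h_n|^{-\chi}\}}F(\mathcal X^n_{\lfloor s\rfloor_{h_n}})\,ds+\mathcal O^n_t\big)=1$ for all $n,t$. Let $p\in[2,\infty)$, $n\in\mathbb N$, $\varepsilon\in[0,\tfrac\beta2-\varrho)$, and let $O\colon[0,T]\times\Omega\to H_\varrho$ be a stochastic process such that for all $t\in[0,T]$ it holds $\mathbb P$-a.s. that $O_t=\int_0^te^{(t-s)A}B\,dW_s$. Then $$\sup_{t\in[0,T]}\|O_t-\mathcal O^n_t\|_{\mathcal L^p(\mathbb P;H_\varrho)}\le\Big[\frac{p(p-1)T^{\beta-2\varrho-2\varepsilon}}{2(\beta-2\varrho-2\varepsilon)}\Big]^{1/2}\|B\|_{HS(H,H_{(\beta-1)/2})}\,n^{-4\varepsilon}.$$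
   Context: $\lambda_{(0,1)}$ is Lebesgue measure on $(0,1)$. $(-A)^rv=\sum_k\lambda_k^r\langle e_k,v\rangle_He_k$; for $r\ge0$, $H_r=\{v\in H\colon\sum_k\lambda_k^{2r}|\langle e_k,v\rangle_H|^2<\infty\}$ with $\|v\|_{H_r}=\|(-A)^rv\|_H$; for $r<0$, $H_r$ is the completion of $H$ under $\|(-A)^r\cdot\|_H$. $e^{tA}v=\sum_ke^{-\lambda_kt}\langle e_k,v\rangle_He_k$. $HS(H,H_r)$ denotes the space of Hilbert–Schmidt operators from $H$ to $H_r$ with its norm. $\|Z\|_{\mathcal L^p(\mathbb P;H_\varrho)}=(\mathbb E\|Z\|_{H_\varrho}^p)^{1/p}$. $\lfloor t\rfloor_h=\max((-\infty,t]\cap\{0,h,-h,2h,-2h,\dots\})$. *)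

theory Defs
  imports "HOL-Probability.Probability"
begin

text \<open>Elements of H are represented by real functions on the reals, regarded on (0,1).\<close>

definition ebasis :: "int \<Rightarrow> real \<Rightarrow> real" where
  "ebasis k x = (if k = 0 then 1
     else if k > 0 then sqrt 2 * cos (2 * real_of_int k * pi * x)
     else sqrt 2 * sin (2 * real_of_int (- k) * pi * x))"

definition inH :: "(real \<Rightarrow> real) \<Rightarrow> bool" where
  "inH v \<longleftrightarrow> set_borel_measurable lborel {0<..<1} v \<and>
              set_integrable lborel {0<..<1} (\<lambda>x. (v x)\<^sup>2)"

definition coef :: "int \<Rightarrow> (real \<Rightarrow> real) \<Rightarrow> real" where
  "coef k v = (LINT x:{0<..<1}|lborel. ebasis k x * v x)"

definition lam :: "real \<Rightarrow> int \<Rightarrow> real" where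
  "lam \<eta> k = 16 * (real_of_int k)^4 * pi^4 - 4 * (real_of_int k)^2 * pi^2 + \<eta>"

definition inHr :: "real \<Rightarrow> real \<Rightarrow> (real \<Rightarrow> real) \<Rightarrow> bool" where
  "inHr \<eta> r v \<longleftrightarrow> inH v \<and> (\<lambda>k. lam \<eta> k powr (2*r) * (coef k v)\<^sup>2) summable_on UNIV"

definition Hr_norm :: "real \<Rightarrow> real \<Rightarrow> (real \<Rightarrow> real) \<Rightarrow> real" where
  "Hr_norm \<eta> r v = sqrt (\<Sum>\<^sub>\<infinity>k. lam \<eta> k powr (2*r) * (coef k v)\<^sup>2)"

definition inPnH :: "nat \<Rightarrow> (real \<Rightarrow> real) \<Rightarrow> bool" where
  "inPnH n v \<longleftrightarrow> inH v \<and> (\<forall>k. \<bar>k\<bar> > int n \<longrightarrow> coef k v = 0)"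

definition Pn_semigroup :: "real \<Rightarrow> nat \<Rightarrow> real \<Rightarrow> (real \<Rightarrow> real) \<Rightarrow> real \<Rightarrow> real" where
  "Pn_semigroup \<eta> n t v x = (\<Sum>k\<in>{- int n..int n}. exp (- lam \<eta> k * t) * coef k v * ebasis k x)"

text \<open>Matrix coefficients \<open>\<langle>e_k, B e_j\<rangle>_H\<close> of B.\<close>
definition Bmat :: "(int \<Rightarrow> real) \<Rightarrow> (int \<Rightarrow> real) \<Rightarrow> int \<Rightarrow> int \<Rightarrow> real" where
  "Bmat b bt k j = (if j = k then b k else 0) + (if j = - k then bt k else 0)"

definition HS_norm_B :: "real \<Rightarrow> real \<Rightarrow> (int \<Rightarrow> real) \<Rightarrow> (int \<Rightarrow> real) \<Rightarrow> real" where
  "HS_norm_B \<eta> r b bt =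
     sqrt (\<Sum>\<^sub>\<infinity>j. (\<Sum>\<^sub>\<infinity>k. lam \<eta> k powr (2*r) * (Bmat b bt k j)\<^sup>2))"

text \<open>Coefficient \<open>\<langle>e_k, F(v)\<rangle>\<close> of \<open>F(v) = \<eta> v - (\<kappa>/2)(v^2)'\<close>, the derivative
  taken in the (periodic) distributional sense:
  \<open>\<langle>e_k,(v^2)'\<rangle> = - \<integral> e_k' v^2\<close>.\<close>
definition F_coef :: "real \<Rightarrow> real \<Rightarrow> int \<Rightarrow> (real \<Rightarrow> real) \<Rightarrow> real" where
  "F_coef \<eta> \<kappa> k v = \<eta> * coef k v
      - (\<kappa> / 2) * (- (LINT x:{0<..<1}|lborel. deriv (ebasis k) x * (v x)\<^sup>2))"

definition grid_floor :: "real \<Rightarrow> real \<Rightarrow> real" where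
  "grid_floor h t = Sup {s. s \<le> t \<and> (\<exists>z::int. s = real_of_int z * h)}"

definition normal_filtration :: "'a measure \<Rightarrow> real \<Rightarrow> (real \<Rightarrow> 'a set set) \<Rightarrow> bool" where
  "normal_filtration M T F \<longleftrightarrow>
     (\<forall>t\<in>{0..T}. sigma_algebra (space M) (F t) \<and> F t \<subseteq> sets M \<and> null_sets M \<subseteq> F t) \<and>
     (\<forall>s\<in>{0..T}. \<forall>t\<in>{0..T}. s \<le> t \<longrightarrow> F s \<subseteq> F t) \<and>
     (\<forall>t\<in>{0..<T}. F t = (\<Inter>u\<in>{t<..T}. F u))"

text \<open>An \<open>Id_H\<close>-cylindrical \<open>(F_t)\<close>-Wiener process on [0,T], represented through its
  coordinates \<open>\<beta>_j(t) = \<langle>e_j, W_t\<rangle>\<close> with respect to the ONB \<open>(e_j)_{j\<in>\<int>}\<close>: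
  a family of independent standard \<open>(F_t)\<close>-Brownian motions.\<close>
definition cyl_wiener :: "'a measure \<Rightarrow> real \<Rightarrow> (real \<Rightarrow> 'a set set)
    \<Rightarrow> (int \<Rightarrow> real \<Rightarrow> 'a \<Rightarrow> real) \<Rightarrow> bool" where
  "cyl_wiener M T F \<beta> \<longleftrightarrow>
     (\<forall>j. \<forall>\<omega>\<in>space M. \<beta> j 0 \<omega> = 0 \<and> continuous_on {0..T} (\<lambda>t. \<beta> j t \<omega>)) \<and>
     (\<forall>j. \<forall>t\<in>{0..T}. \<beta> j t \<in> measurable (measure_of (space M) (F t) (\<lambda>_. 0)) borel) \<and>
     (\<forall>j. \<forall>s\<in>{0..T}. \<forall>t\<in>{0..T}. s < t \<longrightarrow>
         distributed M lborel (\<lambda>\<omega>. \<beta> j t \<omega> - \<beta> j s \<omega>) (normal_density 0 (sqrt (t - s)))) \<and>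
     (\<forall>s\<in>{0..T}. \<forall>t\<in>{0..T}. s < t \<longrightarrow>
         prob_space.indep_sets M
           (\<lambda>i. case i of None \<Rightarrow> F s
                 | Some j \<Rightarrow> {(\<lambda>\<omega>. \<beta> j t \<omega> - \<beta> j s \<omega>) -` A \<inter> space M | A. A \<in> sets borel})
           UNIV)"

text \<open>Riemann sums (left endpoints, uniform partition of [0,t] into N pieces,
  coordinates \<open>|j| \<le> m\<close> of the noise) for the k-th coordinate of
  \<open>\<integral>_0^t \<Phi>(s) dW_s\<close>, where \<open>phi s j = \<langle>e_k, \<Phi>(s) e_j\<rangle>\<close>.\<close>
definition riemann_sum :: "(int \<Rightarrow> real \<Rightarrow> 'a \<Rightarrow> real) \<Rightarrow> (real \<Rightarrow> int \<Rightarrow> real)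
    \<Rightarrow> real \<Rightarrow> nat \<Rightarrow> nat \<Rightarrow> 'a \<Rightarrow> real" where
  "riemann_sum \<beta> phi t N m \<omega> =
     (\<Sum>i<N. \<Sum>j\<in>{- int m..int m}.
        phi (real i * t / real N) j *
          (\<beta> j (real (Suc i) * t / real N) \<omega> - \<beta> j (real i * t / real N) \<omega>))"

text \<open>Z is (a version of) the k-th coordinate of the stochastic integral
  \<open>\<integral>_0^t \<Phi>(s) dW_s\<close> (deterministic integrand): the L^2(P)-limit of the Riemann sums.\<close>
definition is_stoch_int_coord :: "'a measure \<Rightarrow> (int \<Rightarrow> real \<Rightarrow> 'a \<Rightarrow> real)
    \<Rightarrow> (real \<Rightarrow> int \<Rightarrow> real) \<Rightarrow> real \<Rightarrow> ('a \<Rightarrow> real) \<Rightarrow> bool" where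
  "is_stoch_int_coord M \<beta> phi t Z \<longleftrightarrow>
     Z \<in> borel_measurable M \<and>
     (\<forall>N m. integrable M (\<lambda>\<omega>. (Z \<omega> - riemann_sum \<beta> phi t N m \<omega>)\<^sup>2)) \<and>
     ((\<lambda>(N, m). LINT \<omega>|M. (Z \<omega> - riemann_sum \<beta> phi t N m \<omega>)\<^sup>2) \<longlongrightarrow> 0)
        (sequentially \<times>\<^sub>F sequentially)"

definition Lp_norm :: "'a measure \<Rightarrow> real \<Rightarrow> real \<Rightarrow> real \<Rightarrow> ('a \<Rightarrow> real \<Rightarrow> real) \<Rightarrow> ennreal" where
  "Lp_norm M p \<eta> r Z =
     (let I = (\<integral>\<^sup>+ \<omega>. ennreal (Hr_norm \<eta> r (Z \<omega>) powr p) \<partial>M)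
      in if I = \<infinity> then \<infinity> else ennreal (enn2real I powr (1 / p)))"

end

(*
  For |k| > n the k-th coordinate of O_t - O^n_t is a Wiener integral with deterministic
  integrand; all other coordinates vanish.  Its Riemann sums are centred Gaussian, being
  sums of independent Brownian increments, so their p-th moments are bounded by
  (p(p-1)/2)^(p/2) times the p/2-th power of their variance, and Fatou's lemma carries this
  bound to the limit, with variance at most
  V_k = (b_k^2 + bt_k^2) (1 - exp (-2 lambda_k t)) / (2 lambda_k).
  Minkowski's inequality in L^(p/2) then gives
  |O_t - O^n_t|_{L^p(P; H_rho)}^2 <= p(p-1)/2 * sum_{|k|>n} lambda_k^(2 rho) V_k,
  and for |k| > n one has lambda_k >= n^4 and
  lambda_k^(2 rho) V_k <= n^(-8 eps) T^gamma / gamma * (b_k^2 + bt_k^2) lambda_k^(beta-1)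
  with gamma = beta - 2 rho - 2 eps; the last factor sums to the squared Hilbert-Schmidt
  norm of B.
*)
theory Submission
  imports Defs
begin

section \<open>Absolute moments of Gaussian variables\<close>

definition normal_even_moment :: "nat \<Rightarrow> real" where
  "normal_even_moment m = fact (2*m) / (2^m * fact m)"

lemma normal_even_moment_Suc: "normal_even_moment (Suc m) = (2*real m + 1) * normal_even_moment m"
proof -
  have "fact (2 * Suc m) = (fact (2*m) :: real) * (2*real m + 1) * (2*(real m + 1))"
    by (simp add: algebra_simps)
  moreover have "fact (Suc m) = (real m + 1) * (fact m :: real)"
    by simp
  moreover have "(0::real) < fact m"
    by simp
  ultimately show ?thesis
    unfolding normal_even_moment_def by (simp add: divide_simps)
qed

lemma normal_even_moment_ge_1: "normal_even_moment m \<ge> 1"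
proof (induction m)
  case (Suc m)
  then show ?case
    using mult_mono[of 1 "2*real m + 1" 1 "normal_even_moment m"] by (simp add: normal_even_moment_Suc)
qed (simp add: normal_even_moment_def)

lemma normal_even_moment_le: "m \<ge> 1 \<Longrightarrow> normal_even_moment m \<le> (2*real m - 1)^(m-1)"
proof (induction m rule: nat_induct_at_least)
  case base
  then show ?case by (simp add: normal_even_moment_def)
next
  case (Suc m)
  have "normal_even_moment (Suc m) \<le> (2*real m + 1) * (2*real m - 1)^(m-1)"
    using Suc by (simp add: normal_even_moment_Suc)
  also have "\<dots> \<le> (2*real m + 1) * (2*real m + 1)^(m-1)"
    using Suc by (intro mult_left_mono power_mono) auto
  also have "\<dots> = (2*real (Suc m) - 1)^(Suc m - 1)"
    using Suc by (cases m) (auto simp: algebra_simps)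
  finally show ?case .
qed

lemma normal_even_moment_le_powr:
  assumes m: "m \<ge> 1" and x: "2*real m - 1 \<le> x" and r: "real m - 1 \<le> r"
  shows "normal_even_moment m \<le> x powr r"
proof -
  have x1: "x \<ge> 1"
    using m x by linarith
  have "normal_even_moment m \<le> (2*real m - 1)^(m-1)"
    using normal_even_moment_le m by simp
  also have "\<dots> \<le> x^(m-1)"
    using m x by (intro power_mono) auto
  also have "\<dots> = x powr (real (m-1))"
    using x1 by (simp add: powr_realpow)
  also have "\<dots> \<le> x powr r"
    using x1 m r by (intro powr_mono) auto
  finally show ?thesis .
qed

lemma has_bochner_integral_normal_even_moment:
  assumes "\<sigma> > 0"
  shows "has_bochner_integral lborel (\<lambda>x. normal_density 0 \<sigma> x * x^(2*m)) (normal_even_moment m * \<sigma>^(2*m))"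
proof -
  have "(\<sigma>\<^sup>2)^m = \<sigma>^(2*m)"
    by (simp add: power_mult)
  then have "fact (2 * m) / ((2 / \<sigma>\<^sup>2)^m * fact m) = normal_even_moment m * \<sigma>^(2*m)"
    unfolding normal_even_moment_def by (simp add: power_divide field_simps)
  then show ?thesis
    using normal_moment_even[where \<mu>=0 and \<sigma>=\<sigma> and k=m] assms by simp
qed

lemma power2_powr_half: "((x::real)^2) powr (r/2) = \<bar>x\<bar> powr r"
  using powr_powr[of "x^2" "1/2" r] by simp

lemma powr_le_convex_comb_power:
  fixes u a b :: real
  assumes "u \<ge> 0" "a \<ge> 0" "b \<ge> 0" "a + b = 1"
  shows "u powr (a + real m * b) \<le> a * u + b * u^m"
proof (cases "u = 0")
  case False
  then have "u powr (a + real m * b) = u powr a * (u^m) powr b"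
    using assms by (simp add: powr_realpow[symmetric] powr_powr powr_add)
  also have "\<dots> \<le> a * u + b * u^m"
    using Youngs_inequality_0[of a b u "u^m"] assms False by simp
  finally show ?thesis .
qed (use assms in simp)

text \<open>Writing \<open>p/2\<close> as a convex combination of \<open>1\<close> and \<open>m\<close>, the \<open>p\<close>-th absolute moment of
  a centred Gaussian is dominated by the same combination of its second and \<open>2m\<close>-th moments;
  \<open>m = 2\<close> for \<open>p \<le> 4\<close> and \<open>m = \<lceil>p/2\<rceil>\<close> otherwise keep the constant below
  \<open>(p(p-1)/2) powr (p/2)\<close>.\<close>

lemma moment_interpolation_weights:
  fixes p :: real
  assumes p: "p \<ge> 2"
  obtains m a b where "m \<ge> 2" "a \<ge> 0" "b \<ge> 0" "a + b = 1" "p/2 = a + real m * b"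
    "a + b * normal_even_moment m \<le> (p*(p-1)/2) powr (p/2)"
proof -
  have base_ge_1: "p*(p-1)/2 \<ge> 1"
    using mult_mono[of 2 p 1 "p-1"] p by simp
  show ?thesis
  proof (cases "p \<le> 4")
    case True
    have "(4-p)/2 + (p-2)/2 * normal_even_moment 2 = p - 1"
      by (simp add: normal_even_moment_def fact_numeral field_simps)
    also have "\<dots> \<le> p*(p-1)/2"
      using mult_right_mono[of 2 p "p-1"] p by simp
    also have "p*(p-1)/2 = (p*(p-1)/2) powr 1"
      using base_ge_1 by simp
    also have "\<dots> \<le> (p*(p-1)/2) powr (p/2)"
      using base_ge_1 p by (intro powr_mono) auto
    finally have weights: "(4-p)/2 + (p-2)/2 * normal_even_moment 2 \<le> (p*(p-1)/2) powr (p/2)" .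
    show ?thesis
    proof (rule that[of 2 "(4-p)/2" "(p-2)/2"])
      show "p/2 = (4-p)/2 + real 2 * ((p-2)/2)" "(4-p)/2 + (p-2)/2 = 1"
        by (simp_all add: field_simps)
    qed (use True p weights in auto)
  next
    case False
    define m where "m = nat \<lceil>p/2\<rceil>"
    have m: "real m \<ge> p/2" "real m < p/2 + 1" "m \<ge> 2"
      using False ceiling_correct[of "p/2"] unfolding m_def by linarith+
    define b where "b = (p - 2) / (2*real m - 2)"
    have b: "0 \<le> b" "b \<le> 1"
      using m p unfolding b_def by auto
    have "1 - b + b * normal_even_moment m \<le> normal_even_moment m"
      using b normal_even_moment_ge_1[of m] mult_left_mono[of 1 "normal_even_moment m" "1 - b"]
      by (simp add: algebra_simps)
    also have "\<dots> \<le> (p*(p-1)/2) powr (p/2)"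
    proof (rule normal_even_moment_le_powr)
      have "p * 3 \<le> p * (p-1)"
        using False by (intro mult_left_mono) auto
      then show "2*real m - 1 \<le> p*(p-1)/2"
        using m False by linarith
    qed (use m in auto)
    finally have weights: "1 - b + b * normal_even_moment m \<le> (p*(p-1)/2) powr (p/2)" .
    have "(real m - 1) * b = (p - 2)/2"
      using m unfolding b_def by (simp add: field_simps)
    then have "p/2 = (1 - b) + real m * b"
      by (simp add: algebra_simps)
    then show ?thesis
      using that[OF \<open>m \<ge> 2\<close> _ \<open>0 \<le> b\<close> _ _ weights] b by simp
  qed
qed

lemma abs_powr_le_even_powers:
  fixes \<sigma> a b x :: real
  assumes \<sigma>: "\<sigma> > 0" and ab: "a \<ge> 0" "b \<ge> 0" "a + b = 1" and p: "p/2 = a + real m * b"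
  shows "\<bar>x\<bar> powr p \<le> (\<sigma> powr p * a / \<sigma>^2) * x^2 + (\<sigma> powr p * b / \<sigma>^(2*m)) * x^(2*m)"
proof -
  have "\<bar>x\<bar> powr p = \<sigma> powr p * ((x/\<sigma>)^2) powr (p/2)"
    using \<sigma> by (simp add: power2_powr_half abs_div powr_divide)
  also have "\<dots> \<le> \<sigma> powr p * (a * (x/\<sigma>)^2 + b * ((x/\<sigma>)^2)^m)"
    unfolding p using ab by (intro mult_left_mono powr_le_convex_comb_power) auto
  also have "((x/\<sigma>)^2)^m = x^(2*m) / \<sigma>^(2*m)"
    by (simp add: power_divide power_mult)
  also have "\<sigma> powr p * (a * (x/\<sigma>)^2 + b * (x^(2*m) / \<sigma>^(2*m)))
      = (\<sigma> powr p * a / \<sigma>^2) * x^2 + (\<sigma> powr p * b / \<sigma>^(2*m)) * x^(2*m)"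
    by (simp add: power_divide field_simps)
  finally show ?thesis .
qed

lemma normal_abs_moment_le:
  fixes \<sigma> p :: real
  assumes \<sigma>: "\<sigma> > 0" and p: "p \<ge> 2"
  shows "(\<integral>\<^sup>+x. ennreal (normal_density 0 \<sigma> x * \<bar>x\<bar> powr p) \<partial>lborel)
           \<le> ennreal ((p*(p-1)/2) powr (p/2) * \<sigma> powr p)"
proof -
  obtain m a b where m: "m \<ge> 2" and ab: "a \<ge> 0" "b \<ge> 0" "a + b = 1"
    and p_eq: "p/2 = a + real m * b"
    and weights: "a + b * normal_even_moment m \<le> (p*(p-1)/2) powr (p/2)"
    using moment_interpolation_weights[OF p] by blast
  define c1 where "c1 = \<sigma> powr p * a / \<sigma>^2"
  define c2 where "c2 = \<sigma> powr p * b / \<sigma>^(2*m)"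
  have pointwise: "\<bar>x\<bar> powr p \<le> c1 * x^2 + c2 * x^(2*m)" for x :: real
    unfolding c1_def c2_def using abs_powr_le_even_powers[OF \<sigma> ab p_eq] .
  have "(\<integral>\<^sup>+x. ennreal (normal_density 0 \<sigma> x * \<bar>x\<bar> powr p) \<partial>lborel)
      \<le> (\<integral>\<^sup>+x. ennreal (c1 * (normal_density 0 \<sigma> x * x^2) + c2 * (normal_density 0 \<sigma> x * x^(2*m))) \<partial>lborel)"
    using mult_left_mono[OF pointwise normal_density_nonneg]
    by (intro nn_integral_mono ennreal_leI) (simp add: algebra_simps)
  also have "\<dots> = ennreal (c1 * \<sigma>^2 + c2 * (normal_even_moment m * \<sigma>^(2*m)))"
  proof -
    have "has_bochner_integral lborel
        (\<lambda>x. c1 * (normal_density 0 \<sigma> x * x^2) + c2 * (normal_density 0 \<sigma> x * x^(2*m)))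
        (c1 * \<sigma>^2 + c2 * (normal_even_moment m * \<sigma>^(2*m)))"
      using has_bochner_integral_normal_even_moment[OF \<sigma>, of 1]
      by (intro has_bochner_integral_add has_bochner_integral_mult_right
          has_bochner_integral_normal_even_moment \<sigma>) (simp_all add: normal_even_moment_def)
    moreover have "0 \<le> c1 * (normal_density 0 \<sigma> x * x^2) + c2 * (normal_density 0 \<sigma> x * x^(2*m))" for x
    proof -
      have "0 \<le> normal_density 0 \<sigma> x * (c1 * x^2 + c2 * x^(2*m))"
        using order_trans[OF powr_ge_zero pointwise] by simp
      then show ?thesis
        by (simp add: algebra_simps)
    qed
    ultimately show ?thesis
      by (subst nn_integral_eq_integral) (auto simp: has_bochner_integral_iff)
  qed
  also have "c1 * \<sigma>^2 + c2 * (normal_even_moment m * \<sigma>^(2*m)) = \<sigma> powr p * (a + b * normal_even_moment m)"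
    unfolding c1_def c2_def using \<sigma> by (simp add: field_simps)
  also have "\<dots> \<le> (p*(p-1)/2) powr (p/2) * \<sigma> powr p"
    using mult_left_mono[OF weights, of "\<sigma> powr p"] by (simp add: mult.commute)
  finally show ?thesis
    by (simp add: ennreal_leI)
qed

lemma (in prob_space) indep_normal_sum_abs_moment_le:
  assumes I: "finite I" and indep: "indep_vars (\<lambda>_. borel) X I"
    and normal: "\<And>i. i \<in> I \<Longrightarrow> distributed M lborel (X i) (normal_density 0 (\<sigma> i))"
    and \<sigma>: "\<And>i. i \<in> I \<Longrightarrow> \<sigma> i > 0" and p: "p \<ge> 2"
  shows "(\<integral>\<^sup>+\<omega>. ennreal (\<bar>\<Sum>i\<in>I. c i * X i \<omega>\<bar> powr p) \<partial>M)
           \<le> ennreal ((p*(p-1)/2) powr (p/2) * (\<Sum>i\<in>I. (c i)^2 * (\<sigma> i)^2) powr (p/2))"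
proof -
  define G where "G = {i\<in>I. c i \<noteq> 0}"
  have G: "finite G" "G \<subseteq> I"
    using I unfolding G_def by auto
  have sum_G: "(\<Sum>i\<in>I. c i * X i \<omega>) = (\<Sum>i\<in>G. c i * X i \<omega>)" for \<omega>
    unfolding G_def using I by (intro sum.mono_neutral_right) auto
  have var_G: "(\<Sum>i\<in>I. (c i)^2 * (\<sigma> i)^2) = (\<Sum>i\<in>G. (\<bar>c i\<bar> * \<sigma> i)^2)"
    unfolding G_def power_mult_distrib power2_abs using I by (intro sum.mono_neutral_right) auto
  show ?thesis
  proof (cases "G = {}")
    case True
    then show ?thesis
      using p by (simp add: sum_G)
  next
    case False
    define s where "s = sqrt (\<Sum>i\<in>G. (\<bar>c i\<bar> * \<sigma> i)^2)"
    have s: "s > 0"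
      unfolding s_def using G False by (intro real_sqrt_gt_zero sum_pos) (auto simp: G_def dest: \<sigma>)
    have G_indep: "indep_vars (\<lambda>_. borel) (\<lambda>i \<omega>. c i * X i \<omega>) G"
      by (rule indep_vars_compose2[OF indep_vars_subset[OF indep G(2)], where Y="\<lambda>i x. c i * x"])
        simp
    have G_pos: "0 < \<bar>c i\<bar> * \<sigma> i" if "i \<in> G" for i
      using that \<sigma>[of i] unfolding G_def by simp
    have G_normal: "distributed M lborel (\<lambda>\<omega>. c i * X i \<omega>) (normal_density 0 (\<bar>c i\<bar> * \<sigma> i))"
      if "i \<in> G" for i
      using normal_density_affine[OF normal[of i] \<sigma>[of i], of "c i" 0] that unfolding G_def by simp
    have "distributed M lborel (\<lambda>\<omega>. \<Sum>i\<in>G. c i * X i \<omega>) (normal_density 0 s)"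
      using sum_indep_normal[OF G(1) False G_indep G_pos G_normal] unfolding s_def by simp
    then have "(\<integral>\<^sup>+\<omega>. ennreal (\<bar>\<Sum>i\<in>G. c i * X i \<omega>\<bar> powr p) \<partial>M)
        = (\<integral>\<^sup>+x. ennreal (normal_density 0 s x * \<bar>x\<bar> powr p) \<partial>lborel)"
      by (subst distributed_nn_integral[symmetric]) (auto simp: ennreal_mult')
    also have "\<dots> \<le> ennreal ((p*(p-1)/2) powr (p/2) * s powr p)"
      by (rule normal_abs_moment_le[OF s p])
    also have "s powr p = (s^2) powr (p/2)"
      using s by (simp add: power2_powr_half)
    finally show ?thesis
      using s unfolding sum_G var_G s_def by simp
  qed
qed

section \<open>Independence of Wiener increments\<close>

lemma (in prob_space) indep_sets_block_prob:
  assumes block: "indep_sets (\<lambda>x. case x of None \<Rightarrow> E | Some l \<Rightarrow> H l) UNIV"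
    and B: "B \<in> E" and g: "inj_on g K" and K: "finite K" and A: "\<And>j. j \<in> K \<Longrightarrow> A j \<in> H (g j)"
  shows "prob (B \<inter> (\<Inter>j\<in>K. A j)) = prob B * (\<Prod>j\<in>K. prob (A j))"
proof -
  define A' where "A' = (\<lambda>x. case x of None \<Rightarrow> B | Some l \<Rightarrow> A (inv_into K g l))"
  have inv: "inv_into K g (g j) = j" if "j \<in> K" for j
    using g that by auto
  have "prob (B \<inter> (\<Inter>j\<in>K. A j)) = prob (\<Inter>x\<in>insert None (Some ` g ` K). A' x)"
    unfolding A'_def using inv by (auto intro!: arg_cong[where f=prob])
  also have "\<dots> = (\<Prod>x\<in>insert None (Some ` g ` K). prob (A' x))"
    using A B inv K unfolding A'_def by (intro indep_setsD[OF block]) auto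
  also have "\<dots> = prob B * (\<Prod>x\<in>(\<lambda>j. Some (g j)) ` K. prob (A' x))"
    using K by (subst prod.insert) (auto simp: A'_def image_image)
  also have "(\<Prod>x\<in>(\<lambda>j. Some (g j)) ` K. prob (A' x)) = (\<Prod>j\<in>K. prob (A j))"
    using g by (subst prod.reindex) (auto simp: A'_def inv inj_on_def)
  finally show ?thesis .
qed

lemma (in prob_space) indep_sets_prob_space_INT:
  assumes "indep_sets G I" "finite K" "K \<subseteq> I" "\<And>k. k \<in> K \<Longrightarrow> A k \<in> G k"
  shows "prob (space M \<inter> (\<Inter>k\<in>K. A k)) = (\<Prod>k\<in>K. prob (A k))"
proof (cases "K = {}")
  case False
  have "A k \<in> events" if "k \<in> K" for k
    using assms that unfolding indep_sets_def by auto
  then have "A k \<subseteq> space M" if "k \<in> K" for k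
    using that sets.sets_into_space by blast
  then have "space M \<inter> (\<Inter>k\<in>K. A k) = (\<Inter>k\<in>K. A k)"
    using False by blast
  then show ?thesis
    using indep_setsD[OF assms(1,3) False assms(2)] assms(4) by simp
qed (simp add: prob_space)

lemma (in prob_space) indep_sets_Un_block:
  assumes indep: "indep_sets G I"
    and E: "sigma_algebra (space M) E" "\<And>i. i \<in> I \<Longrightarrow> G i \<subseteq> E"
    and block: "indep_sets (\<lambda>x. case x of None \<Rightarrow> E | Some l \<Rightarrow> H l) UNIV"
    and g: "inj_on g J" "\<And>j. j \<in> J \<Longrightarrow> G j = H (g j)"
    and disj: "I \<inter> J = {}"
  shows "indep_sets G (I \<union> J)"
proof -
  have "H l \<subseteq> events" for l
    using block unfolding indep_sets_def by (metis UNIV_I option.simps(5))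
  then have G_events: "G i \<subseteq> events" if "i \<in> I \<union> J" for i
    using that indep g(2) unfolding indep_sets_def by auto
  show ?thesis
  proof (rule indep_setsI)
    fix A K assume K: "K \<noteq> {}" "K \<subseteq> I \<union> J" "finite K" and A: "\<forall>k\<in>K. A k \<in> G k"
    have A_space: "A k \<subseteq> space M" if "k \<in> K" for k
    proof -
      have "A k \<in> events"
        using A that K(2) G_events by blast
      then show ?thesis
        by (rule sets.sets_into_space)
    qed
    define B where "B = space M \<inter> (\<Inter>k\<in>K \<inter> I. A k)"
    have B: "B \<in> E"
    proof -
      interpret E: sigma_algebra "space M" E by (rule E(1))
      have "(\<Inter>k\<in>K \<inter> I. A k) \<inter> space M \<in> E" if "K \<inter> I \<noteq> {}"
        using A E(2) K that by (intro E.Int E.finite_INT) auto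
      then show ?thesis
        unfolding B_def by (cases "K \<inter> I = {}") (auto simp: Int_commute)
    qed
    have prob_B: "prob B = (\<Prod>k\<in>K \<inter> I. prob (A k))"
      unfolding B_def using A K(3) by (intro indep_sets_prob_space_INT[OF indep]) auto
    have "(\<Inter>k\<in>K. A k) = (\<Inter>k\<in>(K \<inter> I) \<union> (K \<inter> J). A k)"
      using K(2) by (intro INF_cong) auto
    moreover have "(\<Inter>k\<in>K. A k) \<subseteq> space M"
      using A_space K(1) by blast
    ultimately have "(\<Inter>k\<in>K. A k) = B \<inter> (\<Inter>j\<in>K \<inter> J. A j)"
      unfolding B_def INT_Un by blast
    then have "prob (\<Inter>k\<in>K. A k) = prob (B \<inter> (\<Inter>j\<in>K \<inter> J. A j))"
      by simp
    also have "\<dots> = prob B * (\<Prod>j\<in>K \<inter> J. prob (A j))"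
      using A g K(3) by (intro indep_sets_block_prob[OF block B]) (auto intro: inj_on_subset)
    also have "\<dots> = (\<Prod>k\<in>(K \<inter> I) \<union> (K \<inter> J). prob (A k))"
      using K(3) disj prob_B by (subst prod.union_disjoint) auto
    also have "\<dots> = (\<Prod>k\<in>K. prob (A k))"
      using K(2) by (intro prod.cong) auto
    finally show "prob (\<Inter>k\<in>K. A k) = (\<Prod>k\<in>K. prob (A k))" .
  qed (rule G_events)
qed

lemma normal_filtration_sigma_algebra:
  assumes "normal_filtration M T F" "t \<in> {0..T}"
  shows "sigma_algebra (space M) (F t)" "F t \<subseteq> sets M"
  using assms unfolding normal_filtration_def by auto

lemma normal_filtration_mono:
  assumes "normal_filtration M T F" "s \<in> {0..T}" "t \<in> {0..T}" "s \<le> t"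
  shows "F s \<subseteq> F t"
  using assms unfolding normal_filtration_def by auto

lemma normal_filtration_subalgebra:
  assumes "normal_filtration M T F" "t \<in> {0..T}"
  shows "subalgebra M (measure_of (space M) (F t) (\<lambda>_. 0))"
  using normal_filtration_sigma_algebra[OF assms]
  unfolding subalgebra_def by (simp add: sigma_algebra.sets_measure_of_eq space_measure_of_conv)

lemma cyl_wiener_adapted:
  assumes filt: "normal_filtration M T F" and wiener: "cyl_wiener M T F W"
    and st: "s \<in> {0..T}" "t \<in> {0..T}" "s \<le> t"
  shows "W j s \<in> borel_measurable (measure_of (space M) (F t) (\<lambda>_. 0))"
proof (rule measurable_from_subalg)
  show "subalgebra (measure_of (space M) (F t) (\<lambda>_. 0)) (measure_of (space M) (F s) (\<lambda>_. 0))"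
    using normal_filtration_sigma_algebra[OF filt st(1)] normal_filtration_sigma_algebra[OF filt st(2)]
      normal_filtration_mono[OF filt st]
    unfolding subalgebra_def by (simp add: sigma_algebra.sets_measure_of_eq space_measure_of_conv)
  show "W j s \<in> borel_measurable (measure_of (space M) (F s) (\<lambda>_. 0))"
    using wiener st unfolding cyl_wiener_def by auto
qed

lemma cyl_wiener_measurable:
  assumes filt: "normal_filtration M T F" and wiener: "cyl_wiener M T F W" and t: "t \<in> {0..T}"
  shows "W j t \<in> borel_measurable M"
  using normal_filtration_subalgebra[OF filt t] cyl_wiener_adapted[OF filt wiener t t order_refl]
  by (rule measurable_from_subalg)

lemma cyl_wiener_increment_vimage:
  assumes filt: "normal_filtration M T F" and wiener: "cyl_wiener M T F W"
    and st: "s \<in> {0..T}" "t \<in> {0..T}" "s \<le> t" and A: "A \<in> sets borel"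
  shows "(\<lambda>\<omega>. W j t \<omega> - W j s \<omega>) -` A \<inter> space M \<in> F t"
proof -
  have "(\<lambda>\<omega>. W j t \<omega> - W j s \<omega>) \<in> borel_measurable (measure_of (space M) (F t) (\<lambda>_. 0))"
    using cyl_wiener_adapted[OF filt wiener st] cyl_wiener_adapted[OF filt wiener st(2) st(2)]
    by measurable
  from measurable_sets[OF this A] show ?thesis
    using normal_filtration_sigma_algebra[OF filt st(2)]
    by (simp add: sigma_algebra.sets_measure_of_eq space_measure_of_conv)
qed

lemma grid_in_interval:
  fixes \<tau> :: "nat \<Rightarrow> real"
  assumes "0 \<le> \<tau> 0" "\<And>i. \<tau> i < \<tau> (Suc i)" "\<tau> N \<le> T" "i \<le> N"
  shows "\<tau> i \<in> {0..T}"
  using lift_Suc_mono_le[of \<tau> 0 i] lift_Suc_mono_le[of \<tau> i N] assms by (auto simp: less_imp_le)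

text \<open>The cells of the grid are added one at a time: the increments over a new cell are
  independent of \<open>F (\<tau> n)\<close>, which contains all the earlier increments.\<close>

lemma cyl_wiener_grid_indep_sets:
  assumes P: "prob_space M" and filt: "normal_filtration M T F" and wiener: "cyl_wiener M T F W"
    and \<tau>: "0 \<le> \<tau> 0" "\<And>i. \<tau> i < \<tau> (Suc i)" "\<tau> N \<le> T"
  shows "prob_space.indep_sets M
     (\<lambda>(i,j). {(\<lambda>\<omega>. W j (\<tau> (Suc i)) \<omega> - W j (\<tau> i) \<omega>) -` A \<inter> space M | A. A \<in> sets borel})
     ({..<N} \<times> J)"
proof -
  interpret prob_space M by (rule P)
  define G where
    "G = (\<lambda>(i,j). {(\<lambda>\<omega>. W j (\<tau> (Suc i)) \<omega> - W j (\<tau> i) \<omega>) -` A \<inter> space M | A. A \<in> sets borel})"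
  have mono: "\<tau> i \<le> \<tau> k" if "i \<le> k" for i k
    using lift_Suc_mono_le[of \<tau> i k] \<tau>(2) that by (simp add: less_imp_le)
  note in_T = grid_in_interval[OF \<tau>]
  have "indep_sets G ({..<n} \<times> J)" if "n \<le> N" for n
    using that
  proof (induction n)
    case 0
    then show ?case by (intro indep_setsI) auto
  next
    case (Suc n)
    have "indep_sets G ({..<n} \<times> J \<union> {n} \<times> J)"
    proof (rule indep_sets_Un_block)
      show "indep_sets G ({..<n} \<times> J)"
        using Suc by simp
      show "sigma_algebra (space M) (F (\<tau> n))"
        using normal_filtration_sigma_algebra[OF filt in_T] Suc by simp
      show "G k \<subseteq> F (\<tau> n)" if "k \<in> {..<n} \<times> J" for k
        using that Suc normal_filtration_mono[OF filt in_T in_T mono[of "Suc (fst k)" n]]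
          cyl_wiener_increment_vimage[OF filt wiener in_T in_T mono[of "fst k" "Suc (fst k)"]]
        unfolding G_def by (force split: prod.splits)
      show "indep_sets (\<lambda>x. case x of None \<Rightarrow> F (\<tau> n) | Some j \<Rightarrow>
          {(\<lambda>\<omega>. W j (\<tau> (Suc n)) \<omega> - W j (\<tau> n) \<omega>) -` A \<inter> space M | A. A \<in> sets borel}) UNIV"
        using wiener in_T[of n] in_T[of "Suc n"] \<tau>(2)[of n] Suc unfolding cyl_wiener_def by auto
      show "inj_on snd ({n} \<times> J)"
        by (auto simp: inj_on_def)
    qed (auto simp: G_def)
    moreover have "{..<Suc n} \<times> J = {..<n} \<times> J \<union> {n} \<times> J"
      by auto
    ultimately show ?case
      by simp
  qed
  then show ?thesis
    unfolding G_def by simp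
qed

lemma cyl_wiener_grid_indep_vars:
  assumes P: "prob_space M" and filt: "normal_filtration M T F" and wiener: "cyl_wiener M T F W"
    and \<tau>: "0 \<le> \<tau> 0" "\<And>i. \<tau> i < \<tau> (Suc i)" "\<tau> N \<le> T"
  shows "prob_space.indep_vars M (\<lambda>_. borel)
     (\<lambda>(i,j) \<omega>. W j (\<tau> (Suc i)) \<omega> - W j (\<tau> i) \<omega>) ({..<N} \<times> J)"
proof -
  interpret prob_space M by (rule P)
  note in_T = grid_in_interval[OF \<tau>]
  show ?thesis
    unfolding indep_vars_def2
    using cyl_wiener_grid_indep_sets[OF P filt wiener \<tau>, of J]
      cyl_wiener_measurable[OF filt wiener in_T] by (auto simp: case_prod_unfold)
qed

lemma cyl_wiener_grid_sum_abs_moment_le: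
  assumes P: "prob_space M" and filt: "normal_filtration M T F" and wiener: "cyl_wiener M T F W"
    and \<tau>: "0 \<le> \<tau> 0" "\<And>i. \<tau> i < \<tau> (Suc i)" "\<tau> N \<le> T"
    and J: "finite J" and p: "p \<ge> 2"
  shows "(\<integral>\<^sup>+\<omega>. ennreal (\<bar>\<Sum>(i,j)\<in>{..<N} \<times> J. c (i,j) * (W j (\<tau> (Suc i)) \<omega> - W j (\<tau> i) \<omega>)\<bar> powr p) \<partial>M)
     \<le> ennreal ((p*(p-1)/2) powr (p/2) * (\<Sum>(i,j)\<in>{..<N} \<times> J. (c (i,j))^2 * (\<tau> (Suc i) - \<tau> i)) powr (p/2))"
proof -
  interpret prob_space M by (rule P)
  define X where "X = (\<lambda>(i,j) \<omega>. W j (\<tau> (Suc i)) \<omega> - W j (\<tau> i) \<omega>)"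
  define \<sigma> where "\<sigma> = (\<lambda>(i::nat,j::int). sqrt (\<tau> (Suc i) - \<tau> i))"
  note in_T = grid_in_interval[OF \<tau>]
  have "(\<integral>\<^sup>+\<omega>. ennreal (\<bar>\<Sum>k\<in>{..<N} \<times> J. c k * X k \<omega>\<bar> powr p) \<partial>M)
     \<le> ennreal ((p*(p-1)/2) powr (p/2) * (\<Sum>k\<in>{..<N} \<times> J. (c k)^2 * (\<sigma> k)^2) powr (p/2))"
  proof (rule indep_normal_sum_abs_moment_le)
    show "indep_vars (\<lambda>_. borel) X ({..<N} \<times> J)"
      unfolding X_def by (rule cyl_wiener_grid_indep_vars[OF P filt wiener \<tau>])
    show "distributed M lborel (X k) (normal_density 0 (\<sigma> k))" if "k \<in> {..<N} \<times> J" for k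
      using that wiener in_T \<tau>(2) unfolding cyl_wiener_def X_def \<sigma>_def by (auto split: prod.splits)
    show "\<sigma> k > 0" for k
      using \<tau>(2) unfolding \<sigma>_def by (auto split: prod.splits)
  qed (use J p in auto)
  moreover have "(\<sigma> k)^2 = \<tau> (Suc (fst k)) - \<tau> (fst k)" for k
    using \<tau>(2)[of "fst k"] unfolding \<sigma>_def by (auto split: prod.splits)
  ultimately show ?thesis
    unfolding X_def by (simp add: case_prod_unfold)
qed

section \<open>Moments of stochastic integrals\<close>

lemma riemann_sum_measurable:
  assumes filt: "normal_filtration M T F" and wiener: "cyl_wiener M T F W" and t: "t \<in> {0..T}"
  shows "riemann_sum W phi t N m \<in> borel_measurable M"
proof -
  have grid_in_T: "real i * t / real N \<in> {0..T}" if "i \<le> N" for i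
  proof (cases "N = 0")
    case False
    have "real i * t \<le> real N * T"
      using t that by (intro mult_mono) auto
    then show ?thesis
      using t False by (simp add: divide_le_eq mult.commute)
  qed (use t in simp)
  show ?thesis
    unfolding riemann_sum_def[abs_def]
    by (intro borel_measurable_sum borel_measurable_times borel_measurable_diff borel_measurable_const
        cyl_wiener_measurable[OF filt wiener] grid_in_T) auto
qed

lemma riemann_sum_abs_moment_le:
  assumes P: "prob_space M" and filt: "normal_filtration M T F" and wiener: "cyl_wiener M T F W"
    and t: "t \<in> {0..T}" and p: "p \<ge> 2"
    and var: "(\<Sum>i<N. \<Sum>j\<in>{- int m..int m}. (phi (real i * t / real N) j)^2 * (t / real N)) \<le> V"
  shows "(\<integral>\<^sup>+\<omega>. ennreal (\<bar>riemann_sum W phi t N m \<omega>\<bar> powr p) \<partial>M)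
     \<le> ennreal ((p*(p-1)/2) powr (p/2) * V powr (p/2))"
proof (cases "t = 0 \<or> N = 0")
  case True
  then show ?thesis
    using p by (auto simp: riemann_sum_def)
next
  case False
  then have tN: "t > 0" "N > 0"
    using t by auto
  define \<tau> where "\<tau> = (\<lambda>i. real i * t / real N)"
  have \<tau>: "0 \<le> \<tau> 0" "\<tau> i < \<tau> (Suc i)" "\<tau> N \<le> T" for i
    unfolding \<tau>_def using tN t by (auto simp: divide_strict_right_mono)
  have step: "\<tau> (Suc i) - \<tau> i = t / real N" for i
    unfolding \<tau>_def by (simp add: diff_divide_distrib[symmetric] algebra_simps)
  have "(\<integral>\<^sup>+\<omega>. ennreal (\<bar>riemann_sum W phi t N m \<omega>\<bar> powr p) \<partial>M)
     \<le> ennreal ((p*(p-1)/2) powr (p/2) *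
          (\<Sum>(i,j)\<in>{..<N} \<times> {- int m..int m}. (phi (\<tau> i) j)^2 * (\<tau> (Suc i) - \<tau> i)) powr (p/2))"
    using cyl_wiener_grid_sum_abs_moment_le[OF P filt wiener \<tau>, of "{- int m..int m}" p
        "\<lambda>(i,j). phi (\<tau> i) j"] p
    by (simp add: riemann_sum_def sum.cartesian_product \<tau>_def)
  also have "\<dots> \<le> ennreal ((p*(p-1)/2) powr (p/2) * V powr (p/2))"
    using var \<tau>(2) p tN unfolding step
    by (intro ennreal_leI mult_left_mono powr_mono2)
      (auto simp: sum.cartesian_product \<tau>_def intro!: sum_nonneg)
  finally show ?thesis .
qed

text \<open>The moment bound passes from the Riemann sums to their \<open>L\<^sup>2\<close>-limit by Fatou's lemma along an
  almost surely convergent subsequence of the diagonal.\<close>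

lemma is_stoch_int_coord_abs_moment_le:
  assumes P: "prob_space M" and filt: "normal_filtration M T F" and wiener: "cyl_wiener M T F W"
    and t: "t \<in> {0..T}" and p: "p \<ge> 2"
    and Z: "is_stoch_int_coord M W phi t Z"
    and var: "\<And>N m. (\<Sum>i<N. \<Sum>j\<in>{- int m..int m}. (phi (real i * t / real N) j)^2 * (t / real N)) \<le> V"
  shows "(\<integral>\<^sup>+\<omega>. ennreal (\<bar>Z \<omega>\<bar> powr p) \<partial>M) \<le> ennreal ((p*(p-1)/2) powr (p/2) * V powr (p/2))"
proof -
  define S where "S = (\<lambda>n. riemann_sum W phi t n n)"
  have diag: "filterlim (\<lambda>n::nat. (n, n)) (sequentially \<times>\<^sub>F sequentially) sequentially"
    by (intro filterlim_Pair filterlim_ident)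
  have "((\<lambda>(N, m). LINT \<omega>|M. (Z \<omega> - riemann_sum W phi t N m \<omega>)\<^sup>2) \<longlongrightarrow> 0)
      (sequentially \<times>\<^sub>F sequentially)"
    using Z unfolding is_stoch_int_coord_def by auto
  from filterlim_compose[OF this diag]
  have "(\<lambda>n. (\<integral>\<omega>. norm ((Z \<omega> - S n \<omega>)^2) \<partial>M)) \<longlonglongrightarrow> 0"
    unfolding S_def by simp
  then obtain r :: "nat \<Rightarrow> nat" where "AE \<omega> in M. (\<lambda>n. (Z \<omega> - S (r n) \<omega>)^2) \<longlonglongrightarrow> 0"
    using tendsto_L1_AE_subseq[of M "\<lambda>n \<omega>. (Z \<omega> - S n \<omega>)^2"] Z
    unfolding is_stoch_int_coord_def S_def by blast
  then have "AE \<omega> in M. (\<lambda>n. ennreal (\<bar>S (r n) \<omega>\<bar> powr p)) \<longlonglongrightarrow> ennreal (\<bar>Z \<omega>\<bar> powr p)"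
  proof eventually_elim
    case (elim \<omega>)
    then have "(\<lambda>n. Z \<omega> - S (r n) \<omega>) \<longlonglongrightarrow> 0"
      using tendsto_real_sqrt[OF elim] by (simp add: tendsto_rabs_zero_iff)
    then have "(\<lambda>n. S (r n) \<omega>) \<longlonglongrightarrow> Z \<omega>"
      using tendsto_diff[OF tendsto_const[of "Z \<omega>"]] by fastforce
    then show ?case
      using p by (intro tendsto_ennrealI tendsto_powr' tendsto_rabs) auto
  qed
  then have "(\<integral>\<^sup>+\<omega>. ennreal (\<bar>Z \<omega>\<bar> powr p) \<partial>M)
      = (\<integral>\<^sup>+\<omega>. liminf (\<lambda>n. ennreal (\<bar>S (r n) \<omega>\<bar> powr p)) \<partial>M)"
    by (intro nn_integral_cong_AE) (auto elim!: AE_mp intro!: lim_imp_Liminf[symmetric])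
  also have "\<dots> \<le> liminf (\<lambda>n. \<integral>\<^sup>+\<omega>. ennreal (\<bar>S (r n) \<omega>\<bar> powr p) \<partial>M)"
    using riemann_sum_measurable[OF filt wiener t] unfolding S_def
    by (intro nn_integral_liminf) measurable
  also have "\<dots> \<le> ennreal ((p*(p-1)/2) powr (p/2) * V powr (p/2))"
    using riemann_sum_abs_moment_le[OF P filt wiener t p var] unfolding S_def
    by (intro Liminf_le) auto
  finally show ?thesis .
qed

lemma is_stoch_int_coord_unique:
  assumes Z1: "is_stoch_int_coord M W phi t Z1" and Z2: "is_stoch_int_coord M W phi t Z2"
  shows "AE \<omega> in M. Z1 \<omega> = Z2 \<omega>"
proof -
  define S where "S = (\<lambda>N m. riemann_sum W phi t N m)"
  define D where "D = (\<lambda>Z N m. LINT \<omega>|M. (Z \<omega> - S N m \<omega>)\<^sup>2)"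
  have i1: "integrable M (\<lambda>\<omega>. (Z1 \<omega> - S N m \<omega>)\<^sup>2)" and i2: "integrable M (\<lambda>\<omega>. (Z2 \<omega> - S N m \<omega>)\<^sup>2)"
    for N m
    using Z1 Z2 unfolding is_stoch_int_coord_def S_def by auto
  have pointwise: "(Z1 \<omega> - Z2 \<omega>)^2 \<le> 2 * (Z1 \<omega> - S N m \<omega>)\<^sup>2 + 2 * (Z2 \<omega> - S N m \<omega>)\<^sup>2"
    for \<omega> N m
    using zero_le_power2[of "Z1 \<omega> + Z2 \<omega> - 2 * S N m \<omega>"] by (simp add: power2_eq_square algebra_simps)
  have int: "integrable M (\<lambda>\<omega>. (Z1 \<omega> - Z2 \<omega>)^2)"
  proof (rule Bochner_Integration.integrable_bound)
    show "integrable M (\<lambda>\<omega>. 2 * (Z1 \<omega> - S 0 0 \<omega>)\<^sup>2 + 2 * (Z2 \<omega> - S 0 0 \<omega>)\<^sup>2)"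
      using i1 i2 by simp
    have "Z1 \<in> borel_measurable M" "Z2 \<in> borel_measurable M"
      using Z1 Z2 unfolding is_stoch_int_coord_def by auto
    then show "(\<lambda>\<omega>. (Z1 \<omega> - Z2 \<omega>)^2) \<in> borel_measurable M"
      by measurable
  qed (use pointwise in \<open>auto intro!: AE_I2\<close>)
  have bound: "(LINT \<omega>|M. (Z1 \<omega> - Z2 \<omega>)^2) \<le> 2 * D Z1 N m + 2 * D Z2 N m" for N m
    using integral_mono[OF int _ pointwise[of _ N m]] i1 i2 unfolding D_def by simp
  have "((\<lambda>(N, m). 2 * D Z1 N m + 2 * D Z2 N m) \<longlongrightarrow> 2 * 0 + 2 * 0) (sequentially \<times>\<^sub>F sequentially)"
    using Z1 Z2 unfolding is_stoch_int_coord_def D_def S_def case_prod_unfold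
    by (intro tendsto_intros) auto
  then have "(LINT \<omega>|M. (Z1 \<omega> - Z2 \<omega>)^2) \<le> 0"
    using bound by (intro tendsto_lowerbound always_eventually) (auto simp: prod_filter_eq_bot)
  then have "(LINT \<omega>|M. (Z1 \<omega> - Z2 \<omega>)^2) = 0"
    by (simp add: antisym integral_nonneg_AE)
  then show ?thesis
    using integral_nonneg_eq_0_iff_AE[OF int] by simp
qed

section \<open>Minkowski's inequality for series\<close>

lemma convex_on_powr_nonneg:
  assumes q: "q \<ge> 1"
  shows "convex_on {0..} (\<lambda>x::real. x powr q)"
proof (rule convex_onI)
  fix x y u :: real
  assume xy: "x \<in> {0..}" "y \<in> {0..}" and u: "0 < u" "u < 1"
  have shrink: "(v * z) powr q \<le> v * z powr q" if "0 \<le> v" "v \<le> 1" "0 \<le> z" for v z :: real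
  proof -
    have "v powr q \<le> v powr 1"
      using that q by (intro powr_mono') auto
    then show ?thesis
      using that by (simp add: powr_mult mult_right_mono)
  qed
  consider "x = 0" | "y = 0" | "x > 0" "y > 0"
    using xy by fastforce
  then show "((1 - u) *\<^sub>R x + u *\<^sub>R y) powr q \<le> (1 - u) * x powr q + u * y powr q"
  proof cases
    case 1
    then show ?thesis
      using shrink[of u y] u xy q by simp
  next
    case 2
    then show ?thesis
      using shrink[of "1 - u" x] u xy q by simp
  next
    case 3
    then show ?thesis
      using convex_onD[OF powr_convex[OF q], of u x y] u by simp
  qed
qed (rule convex_real_interval)

text \<open>Jensen's inequality for \<open>x \<mapsto> x\<^sup>q\<close> with the weights \<open>s k / (\<Sum>s)\<close> at the points \<open>a k / s k\<close>.\<close>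

lemma powr_sum_le_weighted:
  fixes q :: real and a s :: "'k \<Rightarrow> real"
  assumes q: "q \<ge> 1" and K: "finite K"
    and a: "\<And>k. k \<in> K \<Longrightarrow> a k \<ge> 0" and s: "\<And>k. k \<in> K \<Longrightarrow> s k \<ge> 0"
    and zero: "\<And>k. k \<in> K \<Longrightarrow> s k = 0 \<Longrightarrow> a k = 0"
  shows "(\<Sum>k\<in>K. a k) powr q \<le> (\<Sum>k\<in>K. s k) powr (q-1) * (\<Sum>k\<in>K. s k powr (1-q) * a k powr q)"
proof -
  define K' where "K' = {k\<in>K. s k > 0}"
  have K': "finite K'" "K' \<subseteq> K"
    using K unfolding K'_def by auto
  have on_K': "(\<Sum>k\<in>K. f k) = (\<Sum>k\<in>K'. f k)" if "\<And>k. k \<in> K \<Longrightarrow> s k = 0 \<Longrightarrow> f k = 0" for f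
    using K that s unfolding K'_def by (intro sum.mono_neutral_right) force+
  define S where "S = (\<Sum>k\<in>K'. s k)"
  show ?thesis
  proof (cases "K' = {}")
    case True
    then show ?thesis
      using on_K'[of a] zero q by (simp add: sum_nonneg)
  next
    case False
    have S: "S > 0"
      unfolding S_def using K' False by (intro sum_pos) (auto simp: K'_def)
    have "(\<Sum>k\<in>K'. (s k / S) *\<^sub>R (a k / s k)) powr q \<le> (\<Sum>k\<in>K'. (s k / S) * (a k / s k) powr q)"
      using K' a S by (intro convex_on_sum[OF _ False convex_on_powr_nonneg[OF q]])
        (auto simp: S_def K'_def sum_divide_distrib[symmetric])
    moreover have "(\<Sum>k\<in>K'. (s k / S) *\<^sub>R (a k / s k)) = (\<Sum>k\<in>K. a k) / S"
      using on_K'[of a] zero unfolding K'_def by (auto simp: sum_divide_distrib intro!: sum.cong)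
    moreover have "(\<Sum>k\<in>K'. (s k / S) * (a k / s k) powr q) = (\<Sum>k\<in>K. s k powr (1-q) * a k powr q) / S"
      using on_K'[of "\<lambda>k. s k powr (1-q) * a k powr q"] q a unfolding K'_def
      by (auto simp: sum_divide_distrib powr_divide powr_diff intro!: sum.cong)
    ultimately have "((\<Sum>k\<in>K. a k) / S) powr q \<le> (\<Sum>k\<in>K. s k powr (1-q) * a k powr q) / S"
      by simp
    then have "(\<Sum>k\<in>K. a k) powr q \<le> S powr q * ((\<Sum>k\<in>K. s k powr (1-q) * a k powr q) / S)"
      using S a by (simp add: powr_divide sum_nonneg divide_le_eq mult.commute)
    also have "\<dots> = S powr (q-1) * (\<Sum>k\<in>K. s k powr (1-q) * a k powr q)"
      using S by (simp add: powr_diff)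
    finally show ?thesis
      using on_K'[of s] unfolding S_def by simp
  qed
qed

lemma AE_zero_of_nn_integral_powr_zero:
  assumes "f \<in> borel_measurable M" "\<And>\<omega>. f \<omega> \<ge> 0" "q > 0"
    and "(\<integral>\<^sup>+\<omega>. ennreal (f \<omega> powr q) \<partial>M) = 0"
  shows "AE \<omega> in M. f \<omega> = 0"
proof -
  have "AE \<omega> in M. ennreal (f \<omega> powr q) = 0"
    using assms by (subst nn_integral_0_iff_AE[symmetric]) auto
  then show ?thesis
    by eventually_elim simp
qed

lemma nn_integral_powr_sum_le:
  fixes q :: real and a :: "'k \<Rightarrow> 'a \<Rightarrow> real" and s :: "'k \<Rightarrow> real"
  assumes q: "q \<ge> 1" and K: "finite K"
    and a: "\<And>k \<omega>. a k \<omega> \<ge> 0" "\<And>k. a k \<in> borel_measurable M"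
    and s: "\<And>k. s k \<ge> 0"
    and moment: "\<And>k. (\<integral>\<^sup>+\<omega>. ennreal (a k \<omega> powr q) \<partial>M) \<le> ennreal (s k powr q)"
  shows "(\<integral>\<^sup>+\<omega>. ennreal ((\<Sum>k\<in>K. a k \<omega>) powr q) \<partial>M) \<le> ennreal ((\<Sum>k\<in>K. s k) powr q)"
proof -
  define S where "S = (\<Sum>k\<in>K. s k)"
  define w where "w = (\<lambda>k. s k powr (1-q))"
  have S: "S \<ge> 0"
    unfolding S_def using s by (simp add: sum_nonneg)
  have "AE \<omega> in M. a k \<omega> = 0" if "s k = 0" for k
    using moment[of k] that q a by (intro AE_zero_of_nn_integral_powr_zero) auto
  then have "AE \<omega> in M. \<forall>k\<in>K. s k = 0 \<longrightarrow> a k \<omega> = 0"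
    using K by (subst AE_finite_all) auto
  then have "AE \<omega> in M. ennreal ((\<Sum>k\<in>K. a k \<omega>) powr q)
      \<le> ennreal (S powr (q-1)) * (\<Sum>k\<in>K. ennreal (w k) * ennreal (a k \<omega> powr q))"
  proof eventually_elim
    case (elim \<omega>)
    have "(\<Sum>k\<in>K. a k \<omega>) powr q \<le> S powr (q-1) * (\<Sum>k\<in>K. w k * a k \<omega> powr q)"
      unfolding S_def w_def using elim a s by (intro powr_sum_le_weighted[OF q K]) auto
    moreover have "(\<Sum>k\<in>K. ennreal (w k) * ennreal (a k \<omega> powr q))
        = ennreal (\<Sum>k\<in>K. w k * a k \<omega> powr q)"
      unfolding w_def by (simp add: sum_ennreal flip: ennreal_mult)
    ultimately show ?case
      by (simp add: sum_nonneg w_def flip: ennreal_mult)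
  qed
  then have "(\<integral>\<^sup>+\<omega>. ennreal ((\<Sum>k\<in>K. a k \<omega>) powr q) \<partial>M)
      \<le> (\<integral>\<^sup>+\<omega>. ennreal (S powr (q-1)) * (\<Sum>k\<in>K. ennreal (w k) * ennreal (a k \<omega> powr q)) \<partial>M)"
    by (rule nn_integral_mono_AE)
  also have "\<dots> = ennreal (S powr (q-1)) * (\<Sum>k\<in>K. ennreal (w k) * (\<integral>\<^sup>+\<omega>. ennreal (a k \<omega> powr q) \<partial>M))"
    using a(2) by (simp add: nn_integral_cmult nn_integral_sum)
  also have "\<dots> \<le> ennreal (S powr (q-1)) * (\<Sum>k\<in>K. ennreal (w k) * ennreal (s k powr q))"
    by (intro mult_left_mono sum_mono moment) auto
  also have "ennreal (S powr (q-1)) * (\<Sum>k\<in>K. ennreal (w k) * ennreal (s k powr q)) = ennreal (S powr q)"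
  proof -
    have "w k * s k powr q = s k" for k
      using s[of k] unfolding w_def by (cases "s k = 0") (simp_all flip: powr_add)
    moreover have "S powr (q-1) * S = S powr q"
      using S q by (cases "S = 0") (auto simp: powr_diff)
    ultimately show ?thesis
      unfolding S_def using s by (simp add: w_def sum_ennreal sum_nonneg flip: ennreal_mult)
  qed
  finally show ?thesis
    unfolding S_def .
qed

lemma infsum_int_le_of_partial_sums_le:
  fixes a :: "int \<Rightarrow> real"
  assumes "\<And>k. a k \<ge> 0" and partial: "\<And>N. (\<Sum>k\<in>{- int N..int N}. a k) \<le> B"
  shows "(\<Sum>\<^sub>\<infinity>k. a k) \<le> B"
proof (cases "a summable_on UNIV")
  case True
  show ?thesis
  proof (rule infsum_le_finite_sums[OF True])
    fix F :: "int set" assume "finite F"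
    then obtain m where m: "\<forall>k\<in>F. \<bar>k\<bar> \<le> m"
      using infinite_int_iff_unbounded by (metis not_le)
    then have "sum a F \<le> (\<Sum>k\<in>{- int (nat m)..int (nat m)}. a k)"
      using assms(1) by (intro sum_mono2) (auto simp: abs_le_iff)
    then show "sum a F \<le> B"
      using partial order_trans by blast
  qed
next
  case False
  then show ?thesis
    using partial[of 0] assms(1)[of 0] by (simp add: infsum_not_exists)
qed

lemma powr_infsum_int_le_SUP:
  fixes a :: "int \<Rightarrow> real"
  assumes q: "q \<ge> 1" and a: "\<And>k. a k \<ge> 0"
  shows "ennreal ((\<Sum>\<^sub>\<infinity>k. a k) powr q) \<le> (SUP N. ennreal ((\<Sum>k\<in>{- int N..int N}. a k) powr q))"
proof (cases "SUP N. ennreal ((\<Sum>k\<in>{- int N..int N}. a k) powr q)" rule: ennreal_cases)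
  case (real l)
  have "(\<Sum>k\<in>{- int N..int N}. a k) powr q \<le> l" for N
    using SUP_upper[of N UNIV "\<lambda>N. ennreal ((\<Sum>k\<in>{- int N..int N}. a k) powr q)"] real
    by (simp add: ennreal_le_iff)
  then have "(\<Sum>k\<in>{- int N..int N}. a k) \<le> l powr (1/q)" for N
    using q a powr_mono2[of "1/q" "(\<Sum>k\<in>{- int N..int N}. a k) powr q" l]
    by (simp add: powr_powr sum_nonneg)
  then have "(\<Sum>\<^sub>\<infinity>k. a k) \<le> l powr (1/q)"
    using a by (intro infsum_int_le_of_partial_sums_le)
  then have "(\<Sum>\<^sub>\<infinity>k. a k) powr q \<le> l"
    using q a powr_mono2[of q "\<Sum>\<^sub>\<infinity>k. a k" "l powr (1/q)"] real
    by (simp add: powr_powr infsum_nonneg)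
  then show ?thesis
    using real by (simp add: ennreal_leI)
qed (metis top_greatest)

lemma nn_integral_powr_infsum_le:
  fixes q :: real and a :: "int \<Rightarrow> 'a \<Rightarrow> real" and s :: "int \<Rightarrow> real"
  assumes q: "q \<ge> 1"
    and a: "\<And>k \<omega>. a k \<omega> \<ge> 0" "\<And>k. a k \<in> borel_measurable M"
    and s: "\<And>k. s k \<ge> 0" "s summable_on UNIV"
    and moment: "\<And>k. (\<integral>\<^sup>+\<omega>. ennreal (a k \<omega> powr q) \<partial>M) \<le> ennreal (s k powr q)"
  shows "(\<integral>\<^sup>+\<omega>. ennreal ((\<Sum>\<^sub>\<infinity>k. a k \<omega>) powr q) \<partial>M) \<le> ennreal ((\<Sum>\<^sub>\<infinity>k. s k) powr q)"
proof -
  define f where "f = (\<lambda>N \<omega>. ennreal ((\<Sum>k\<in>{- int N..int N}. a k \<omega>) powr q))"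
  have "incseq f"
    unfolding f_def using a(1) q
    by (intro incseq_SucI le_funI ennreal_leI powr_mono2 sum_mono2) (auto intro: sum_nonneg)
  have "(\<integral>\<^sup>+\<omega>. ennreal ((\<Sum>\<^sub>\<infinity>k. a k \<omega>) powr q) \<partial>M) \<le> (\<integral>\<^sup>+\<omega>. (SUP N. f N \<omega>) \<partial>M)"
    unfolding f_def using q a(1) by (intro nn_integral_mono powr_infsum_int_le_SUP)
  also have "\<dots> = (SUP N. \<integral>\<^sup>+\<omega>. f N \<omega> \<partial>M)"
    using \<open>incseq f\<close> a(2) unfolding f_def by (intro nn_integral_monotone_convergence_SUP) auto
  also have "\<dots> \<le> ennreal ((\<Sum>\<^sub>\<infinity>k. s k) powr q)"
  proof (rule SUP_least)
    fix N
    have "(\<integral>\<^sup>+\<omega>. f N \<omega> \<partial>M) \<le> ennreal ((\<Sum>k\<in>{- int N..int N}. s k) powr q)"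
      unfolding f_def using q a s moment by (intro nn_integral_powr_sum_le) auto
    also have "\<dots> \<le> ennreal ((\<Sum>\<^sub>\<infinity>k. s k) powr q)"
      using s q infsum_mono_neutral[OF summable_on_finite s(2), of "{- int N..int N}"]
      by (intro ennreal_leI powr_mono2) (auto intro: sum_nonneg)
    finally show "(\<integral>\<^sup>+\<omega>. f N \<omega> \<partial>M) \<le> ennreal ((\<Sum>\<^sub>\<infinity>k. s k) powr q)" .
  qed
  finally show ?thesis .
qed

section \<open>Spectral estimates\<close>

lemma lam_ge_power4:
  assumes "\<eta> > 0"
  shows "lam \<eta> k \<ge> (real_of_int k)^4"
proof (cases "k = 0")
  case False
  define x where "x = (real_of_int k)^2"
  have "\<bar>real_of_int k\<bar> \<ge> 1"
    using False by linarith
  then have x: "x \<ge> 1"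
    unfolding x_def by (metis one_le_power power2_abs)
  define P where "P = pi^2"
  have "9 \<le> P"
    using mult_mono[of 3 pi 3 pi] pi_gt3 unfolding P_def by (simp add: power2_eq_square)
  then have "9 * P \<le> P * P"
    by (intro mult_right_mono) auto
  then have "16 * P^2 - 4 * P - 1 \<ge> 4 * P"
    using \<open>9 \<le> P\<close> unfolding power2_eq_square by linarith
  then have "x^2 * (16 * P^2 - 4 * P - 1) \<ge> x^2 * (4 * P)"
    by (intro mult_left_mono) auto
  moreover have "x^2 * (4 * P) \<ge> x * (4 * P)"
    using x \<open>9 \<le> P\<close> by (intro mult_right_mono) (auto simp: power2_eq_square)
  moreover have "lam \<eta> k = 16 * x^2 * P^2 - 4 * x * P + \<eta>" "(real_of_int k)^4 = x^2"
    unfolding lam_def x_def P_def by (simp_all flip: power_mult power_mult_distrib)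
  moreover have "0 \<le> P * x"
    using \<open>9 \<le> P\<close> x by simp
  ultimately show ?thesis
    using assms by (simp add: algebra_simps)
qed (use assms in \<open>simp add: lam_def\<close>)

lemma lam_pos:
  assumes "\<eta> > 0"
  shows "lam \<eta> k > 0"
proof (cases "k = 0")
  case False
  then have "(real_of_int k)^4 > 0"
    by simp
  then show ?thesis
    using lam_ge_power4[OF assms, of k] by linarith
qed (use assms in \<open>simp add: lam_def\<close>)

lemma lam_powr_le:
  assumes "\<eta> > 0" "k \<noteq> 0" "e \<le> 0"
  shows "lam \<eta> k powr e \<le> \<bar>real_of_int k\<bar> powr (4*e)"
proof -
  have k4: "(real_of_int k)^4 = \<bar>real_of_int k\<bar> powr 4"
    using powr_realpow[of "\<bar>real_of_int k\<bar>" 4] assms(2) by (simp add: power_abs)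
  have "lam \<eta> k powr e \<le> ((real_of_int k)^4) powr e"
    using lam_ge_power4[OF assms(1), of k] assms by (intro powr_mono2') auto
  then show ?thesis
    unfolding k4 powr_powr by simp
qed

lemma Bmat_sq_sum_le:
  assumes "k \<noteq> 0" "finite J"
  shows "(\<Sum>j\<in>J. (Bmat b bt k j)^2) \<le> (b k)^2 + (bt k)^2"
proof -
  have "(Bmat b bt k j)^2 = (if j = k then (b k)^2 else 0) + (if j = - k then (bt k)^2 else 0)" for j
    using assms(1) unfolding Bmat_def by (auto simp: power2_eq_square)
  then show ?thesis
    using assms(2) by (simp add: sum.distrib sum.delta)
qed

text \<open>Left-endpoint Riemann sums of the increasing function \<open>s \<mapsto> exp (-2 l (t - s))\<close>
  underestimate its integral over \<open>[0, t]\<close>.\<close>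

lemma riemann_sum_exp_le_integral:
  fixes l t :: real
  assumes l: "l > 0" and t: "t \<ge> 0"
  shows "(\<Sum>i<N. exp (-2*l*(t - real i * t / real N)) * (t / real N)) \<le> (1 - exp (-2*l*t)) / (2*l)"
proof (cases "t = 0 \<or> N = 0")
  case True
  then show ?thesis
    using l t by auto
next
  case False
  then have tN: "t > 0" "N > 0"
    using t by auto
  define h where "h = t / real N"
  define q where "q = exp (-2*l*h)"
  have h: "h > 0"
    unfolding h_def using tN by simp
  have q: "0 < q" "q < 1"
    unfolding q_def using l h by auto
  have "exp (-2*l*(t - real i * t / real N)) = q^(Suc (N - Suc i))" if "i < N" for i
  proof -
    have e: "-2*l*(t - real i * t / real N) = real (Suc (N - Suc i)) * (-2*l*h)"
      unfolding h_def using that tN by (simp add: of_nat_diff field_simps)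
    show ?thesis
      unfolding q_def e by (rule exp_of_nat_mult)
  qed
  then have "(\<Sum>i<N. exp (-2*l*(t - real i * t / real N)) * (t / real N)) = h * (\<Sum>i<N. q^(Suc (N - Suc i)))"
    unfolding h_def by (simp add: sum_distrib_left mult.commute)
  also have "(\<Sum>i<N. q^(Suc (N - Suc i))) = q * (1 - q^N) / (1 - q)"
    using q by (simp add: sum.nat_diff_reindex sum_distrib_left[symmetric] sum_gp_strict)
  also have "q^N = exp (-2*l*t)"
    unfolding q_def h_def using tN by (simp flip: exp_of_nat_mult)
  finally have eq: "(\<Sum>i<N. exp (-2*l*(t - real i * t / real N)) * (t / real N))
      = (h * q / (1 - q)) * (1 - exp (-2*l*t))"
    by simp
  have "2*l*h \<le> exp (2*l*h) - 1"
    using exp_ge_add_one_self[of "2*l*h"] by linarith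
  then have "2*l*h * q \<le> (exp (2*l*h) - 1) * q"
    using q by (intro mult_right_mono) auto
  also have "\<dots> = 1 - q"
    unfolding q_def by (simp add: algebra_simps exp_minus_inverse)
  finally have "h * q / (1 - q) \<le> 1 / (2*l)"
    using q l by (simp add: field_simps)
  moreover have "0 \<le> 1 - exp (-2*l*t)"
    using l t by simp
  ultimately show ?thesis
    unfolding eq by (metis mult_right_mono times_divide_eq_left mult_1)
qed

text \<open>For \<open>k \<noteq> 0\<close> this is the variance of \<open>\<langle>e\<^sub>k, O\<^sub>t\<rangle> =
  \<integral>\<^sub>0\<^sup>t exp (-\<lambda>\<^sub>k (t - s)) (b k d\<beta>\<^sub>k + bt k d\<beta>\<^sub>-\<^sub>k)\<close>.\<close>

definition coord_variance :: "real \<Rightarrow> (int \<Rightarrow> real) \<Rightarrow> (int \<Rightarrow> real) \<Rightarrow> real \<Rightarrow> int \<Rightarrow> real" where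
  "coord_variance \<eta> b bt t k = ((b k)^2 + (bt k)^2) * ((1 - exp (-2 * lam \<eta> k * t)) / (2 * lam \<eta> k))"

lemma coord_variance_nonneg:
  assumes "\<eta> > 0" "t \<ge> 0"
  shows "coord_variance \<eta> b bt t k \<ge> 0"
  unfolding coord_variance_def using assms lam_pos[OF assms(1), of k] by (simp add: divide_nonneg_pos)

lemma coord_riemann_variance_le:
  assumes eta: "\<eta> > 0" and k: "k \<noteq> 0" and t: "t \<ge> 0"
  shows "(\<Sum>i<N. \<Sum>j\<in>{- int m..int m}.
            (exp (- lam \<eta> k * (t - real i * t / real N)) * Bmat b bt k j)^2 * (t / real N))
         \<le> coord_variance \<eta> b bt t k"
proof -
  define l where "l = lam \<eta> k"
  define e where "e = (\<lambda>i::nat. exp (-2*l*(t - real i * t / real N)) * (t / real N))"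
  have sq: "(exp (- l * u) * y)^2 = exp (-2*l*u) * y^2" for u y :: real
    by (simp add: power_mult_distrib power2_eq_square flip: exp_add)
  have "(\<Sum>i<N. \<Sum>j\<in>{- int m..int m}. (exp (- l * (t - real i * t / real N)) * Bmat b bt k j)^2 * (t / real N))
      = (\<Sum>i<N. e i * (\<Sum>j\<in>{- int m..int m}. (Bmat b bt k j)^2))"
    unfolding e_def sq by (simp add: sum_distrib_left sum_distrib_right sum_divide_distrib mult_ac)
  also have "\<dots> \<le> (\<Sum>i<N. e i * ((b k)^2 + (bt k)^2))"
    unfolding e_def using t by (intro sum_mono mult_left_mono Bmat_sq_sum_le k) auto
  also have "\<dots> = ((b k)^2 + (bt k)^2) * (\<Sum>i<N. e i)"
    by (subst sum_distrib_left) (simp add: mult.commute)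
  also have "\<dots> \<le> coord_variance \<eta> b bt t k"
    unfolding coord_variance_def e_def l_def
    by (intro mult_left_mono riemann_sum_exp_le_integral lam_pos eta t) simp
  finally show ?thesis
    unfolding l_def .
qed

lemma is_stoch_int_coord_weighted_moment_le:
  assumes P: "prob_space M" and filt: "normal_filtration M T F" and wiener: "cyl_wiener M T F W"
    and t: "t \<in> {0..T}" and p: "p \<ge> 2" and eta: "\<eta> > 0" and k: "k \<noteq> 0"
    and Z: "is_stoch_int_coord M W (\<lambda>s j. exp (- lam \<eta> k * (t - s)) * Bmat b bt k j) t Z"
  shows "(\<integral>\<^sup>+\<omega>. ennreal ((lam \<eta> k powr (2*\<rho>) * (Z \<omega>)^2) powr (p/2)) \<partial>M)
     \<le> ennreal ((p*(p-1)/2 * lam \<eta> k powr (2*\<rho>) * coord_variance \<eta> b bt t k) powr (p/2))"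
proof -
  define L where "L = lam \<eta> k powr (2*\<rho>)"
  define V where "V = coord_variance \<eta> b bt t k"
  define c where "c = p*(p-1)/2"
  have L: "L > 0"
    unfolding L_def using lam_pos[OF eta, of k] by simp
  have V: "V \<ge> 0" and c: "c \<ge> 0"
    unfolding V_def c_def using coord_variance_nonneg[OF eta] t p by auto
  have "(L * (Z \<omega>)^2) powr (p/2) = L powr (p/2) * \<bar>Z \<omega>\<bar> powr p" for \<omega>
    using L by (simp add: powr_mult power2_powr_half)
  then have "(\<integral>\<^sup>+\<omega>. ennreal ((L * (Z \<omega>)^2) powr (p/2)) \<partial>M)
      = (\<integral>\<^sup>+\<omega>. ennreal (L powr (p/2)) * ennreal (\<bar>Z \<omega>\<bar> powr p) \<partial>M)"
    by (simp add: ennreal_mult)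
  also have "\<dots> = ennreal (L powr (p/2)) * (\<integral>\<^sup>+\<omega>. ennreal (\<bar>Z \<omega>\<bar> powr p) \<partial>M)"
    using Z unfolding is_stoch_int_coord_def by (intro nn_integral_cmult) auto
  also have "\<dots> \<le> ennreal (L powr (p/2)) * ennreal (c powr (p/2) * V powr (p/2))"
    unfolding c_def V_def
    using is_stoch_int_coord_abs_moment_le[OF P filt wiener t p Z coord_riemann_variance_le[OF eta k]] t
    by (intro mult_left_mono) auto
  also have "\<dots> = ennreal ((c * L * V) powr (p/2))"
    using L V c by (simp add: powr_mult mult_ac flip: ennreal_mult)
  finally show ?thesis
    unfolding L_def V_def c_def by (simp add: mult_ac)
qed

lemma one_minus_exp_le_powr:
  fixes y \<gamma> :: real
  assumes y: "y \<ge> 0" and \<gamma>: "0 < \<gamma>" "\<gamma> \<le> 1"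
  shows "(1 - exp (-2*y)) / 2 \<le> y powr \<gamma>"
proof (cases "y \<le> 1")
  case True
  have "(1 - exp (-2*y)) / 2 \<le> y"
    using exp_ge_add_one_self[of "-2*y"] by simp
  also have "y = y powr 1"
    using y by (cases "y = 0") simp_all
  also have "\<dots> \<le> y powr \<gamma>"
    using True y \<gamma> by (intro powr_mono') auto
  finally show ?thesis .
next
  case False
  have "1 - exp (-2*y) \<le> 2"
    using exp_gt_zero[of "-2*y"] by linarith
  then have "(1 - exp (-2*y)) / 2 \<le> 1"
    by simp
  also have "1 \<le> y powr \<gamma>"
    using False \<gamma> by (intro ge_one_powr_ge_zero) auto
  finally show ?thesis .
qed

text \<open>Split \<open>l powr (2\<rho> - 1)\<close> as \<open>l powr (\<beta> - 1) * l powr (-2\<epsilon>) * l powr (-\<gamma>)\<close>: the middle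
  factor gives the rate since \<open>l \<ge> n\<^sup>4\<close>, and the last one is absorbed by the time factor
  because \<open>(1 - exp (-2 l t)) / 2 \<le> (l t) powr \<gamma>\<close>.\<close>

lemma tail_coord_variance_le:
  fixes l t T \<beta> \<rho> \<epsilon> :: real and n :: nat
  defines "\<gamma> \<equiv> \<beta> - 2*\<rho> - 2*\<epsilon>"
  assumes l: "l \<ge> real n ^ 4" and n: "n \<ge> 1" and t: "0 \<le> t" "t \<le> T"
    and \<gamma>: "0 < \<gamma>" "\<gamma> \<le> 1" and \<epsilon>: "\<epsilon> \<ge> 0"
  shows "l powr (2*\<rho>) * ((1 - exp (-2*l*t)) / (2*l))
          \<le> l powr (\<beta> - 1) * (real n powr (-4*\<epsilon>))^2 * (T powr \<gamma> / \<gamma>)"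
proof -
  have "real n ^ 4 \<ge> 1"
    using n by simp
  then have l_pos: "l > 0"
    using l by linarith
  have "l powr (\<beta> - 1) * l powr (-2*\<epsilon>) * l powr (-\<gamma>) = l powr (2*\<rho> - 1)"
    unfolding powr_add[symmetric] \<gamma>_def by (simp add: algebra_simps)
  also have "\<dots> = l powr (2*\<rho>) / l"
    using l_pos by (simp add: powr_diff)
  finally have split: "l powr (2*\<rho>) / l = l powr (\<beta> - 1) * l powr (-2*\<epsilon>) * l powr (-\<gamma>)"
    by simp
  have rate: "l powr (-2*\<epsilon>) \<le> (real n powr (-4*\<epsilon>))^2"
  proof -
    have "l powr (-2*\<epsilon>) \<le> (real n ^ 4) powr (-2*\<epsilon>)"
      using l n \<epsilon> by (intro powr_mono2') auto
    also have "real n ^ 4 = real n powr 4"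
      using powr_realpow[of "real n" 4] n by simp
    also have "(real n powr 4) powr (-2*\<epsilon>) = (real n powr (-4*\<epsilon>))^2"
      unfolding powr_powr power2_eq_square powr_add[symmetric] by simp
    finally show ?thesis .
  qed
  have time: "l powr (-\<gamma>) * ((1 - exp (-2*l*t)) / 2) \<le> T powr \<gamma> / \<gamma>"
  proof -
    have "l powr (-\<gamma>) * ((1 - exp (-2*(l*t))) / 2) \<le> l powr (-\<gamma>) * (l*t) powr \<gamma>"
      using l_pos t \<gamma> by (intro mult_left_mono one_minus_exp_le_powr) auto
    also have "\<dots> = t powr \<gamma>"
      using l_pos t by (simp add: powr_mult powr_minus field_simps)
    also have "\<dots> \<le> T powr \<gamma>"
      using t \<gamma> by (intro powr_mono2) auto
    also have "\<dots> \<le> T powr \<gamma> / \<gamma>"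
      using \<gamma> by (simp add: le_divide_eq mult_left_le)
    finally show ?thesis
      by (simp add: mult.assoc)
  qed
  have "l powr (2*\<rho>) * ((1 - exp (-2*l*t)) / (2*l))
      = l powr (\<beta> - 1) * l powr (-2*\<epsilon>) * (l powr (-\<gamma>) * ((1 - exp (-2*l*t)) / 2))"
    using split l_pos by (simp add: field_simps)
  also have "\<dots> \<le> l powr (\<beta> - 1) * (real n powr (-4*\<epsilon>))^2 * (T powr \<gamma> / \<gamma>)"
    using rate time l_pos t by (intro mult_mono mult_left_mono) auto
  finally show ?thesis .
qed

lemma HS_weights_summable:
  assumes eta: "\<eta> > 0" and beta: "\<beta> \<le> 1"
    and bsum: "(\<lambda>m. ((b m)\<^sup>2 + (bt m)\<^sup>2) * \<bar>real_of_int m\<bar> powr (4*\<beta> - 4)) summable_on (UNIV - {0})"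
  shows "(\<lambda>k. ((b k)^2 + (bt k)^2) * lam \<eta> k powr (\<beta> - 1)) summable_on (UNIV - {0})"
proof (rule summable_on_comparison_test[OF bsum])
  fix k :: int
  assume "k \<in> UNIV - {0}"
  then have "lam \<eta> k powr (\<beta> - 1) \<le> \<bar>real_of_int k\<bar> powr (4*\<beta> - 4)"
    using lam_powr_le[OF eta, of k "\<beta> - 1"] beta by (simp add: algebra_simps)
  then show "((b k)^2 + (bt k)^2) * lam \<eta> k powr (\<beta> - 1)
      \<le> ((b k)\<^sup>2 + (bt k)\<^sup>2) * \<bar>real_of_int k\<bar> powr (4*\<beta> - 4)"
    by (simp add: mult_left_mono)
qed simp

lemma infsum_Bmat_column:
  assumes "j \<noteq> 0"
  shows "(\<Sum>\<^sub>\<infinity>k. w k * (Bmat b bt k j)^2) = w j * (b j)^2 + w (- j) * (bt (- j))^2"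
proof -
  have "(\<Sum>\<^sub>\<infinity>k. w k * (Bmat b bt k j)^2) = (\<Sum>\<^sub>\<infinity>k\<in>{j, - j}. w k * (Bmat b bt k j)^2)"
    by (rule infsum_cong_neutral) (auto simp: Bmat_def)
  then show ?thesis
    using assms unfolding Bmat_def by simp
qed

text \<open>Column \<open>j\<close> of \<open>B\<close> carries \<open>b j\<close> in row \<open>j\<close> and \<open>bt (-j)\<close> in row \<open>-j\<close>, so summing the
  columns \<open>j \<noteq> 0\<close> and reindexing by \<open>j \<mapsto> -j\<close> reproduces the row weights.\<close>

lemma HS_weights_infsum_le:
  assumes summable: "(\<lambda>k. ((b k)^2 + (bt k)^2) * lam \<eta> k powr r) summable_on (UNIV - {0})"
  shows "(\<Sum>\<^sub>\<infinity>k\<in>UNIV - {0}. ((b k)^2 + (bt k)^2) * lam \<eta> k powr r) \<le> (HS_norm_B \<eta> (r/2) b bt)^2"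
proof -
  define U where "U = (UNIV - {0} :: int set)"
  define w where "w = (\<lambda>k. lam \<eta> k powr r)"
  define col where "col = (\<lambda>j. \<Sum>\<^sub>\<infinity>k. w k * (Bmat b bt k j)^2)"
  have A: "(\<lambda>k. w k * (b k)^2) summable_on U" and A': "(\<lambda>k. w k * (bt k)^2) summable_on U"
    using summable unfolding U_def w_def
    by (auto intro: summable_on_comparison_test[OF summable] simp: algebra_simps)
  have bij: "bij_betw uminus U U"
    unfolding U_def by (rule bij_betwI[where g=uminus]) auto
  have A'_neg: "(\<lambda>k. w (- k) * (bt (- k))^2) summable_on U"
      "(\<Sum>\<^sub>\<infinity>k\<in>U. w (- k) * (bt (- k))^2) = (\<Sum>\<^sub>\<infinity>k\<in>U. w k * (bt k)^2)"
    using summable_on_reindex_bij_betw[OF bij, of "\<lambda>k. w k * (bt k)^2"]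
      infsum_reindex_bij_betw[OF bij, of "\<lambda>k. w k * (bt k)^2"] A' by simp_all
  have col_U: "col j = w j * (b j)^2 + w (- j) * (bt (- j))^2" if "j \<in> U" for j
    using that unfolding col_def U_def by (simp add: infsum_Bmat_column)
  then have col_summable: "col summable_on U"
    using summable_on_add[OF A A'_neg(1)] summable_on_cong[of U col] by auto
  have "(\<Sum>\<^sub>\<infinity>k\<in>U. ((b k)^2 + (bt k)^2) * lam \<eta> k powr r)
      = (\<Sum>\<^sub>\<infinity>k\<in>U. w k * (b k)^2) + (\<Sum>\<^sub>\<infinity>k\<in>U. w k * (bt k)^2)"
    unfolding w_def by (subst infsum_add[symmetric, OF A[unfolded w_def] A'[unfolded w_def]])
      (simp add: algebra_simps)
  also have "\<dots> = (\<Sum>\<^sub>\<infinity>j\<in>U. col j)"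
    using col_U by (simp add: A'_neg(2)[symmetric] infsum_add[symmetric, OF A A'_neg(1)] cong: infsum_cong)
  also have "\<dots> \<le> (\<Sum>\<^sub>\<infinity>j. col j)"
  proof (rule infsum_mono_neutral[OF col_summable])
    show "col summable_on UNIV"
      using col_summable unfolding U_def by (metis insert_Diff_single insert_UNIV summable_on_insert_iff)
  qed (auto simp: col_def w_def intro: infsum_nonneg)
  also have "\<dots> = (HS_norm_B \<eta> (r/2) b bt)^2"
    unfolding HS_norm_B_def col_def w_def by (simp add: infsum_nonneg)
  finally show ?thesis
    unfolding U_def .
qed

section \<open>The projection error\<close>

lemma abs_ebasis_le: "\<bar>ebasis k x\<bar> \<le> sqrt 2"
proof -
  have "1 \<le> sqrt (2::real)"
    by simp
  then show ?thesis
    unfolding ebasis_def using abs_cos_le_one abs_sin_le_one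
    by (auto simp: abs_mult intro: mult_left_le order_trans[OF _ \<open>1 \<le> sqrt 2\<close>])
qed

lemma inH_coef_integrable:
  assumes v: "inH v"
  shows "set_integrable lborel {0<..<1} (\<lambda>x. ebasis k x * v x)"
proof -
  have "set_integrable lborel {0<..<1} (\<lambda>x. sqrt 2 * (1 + (v x)^2))"
    using v unfolding inH_def set_integrable_def
    by (auto simp: algebra_simps intro!: integrable_real_indicator)
  then show ?thesis
  proof (rule set_integrable_bound)
    have "ebasis k \<in> borel_measurable lborel"
      unfolding ebasis_def[abs_def] by measurable
    moreover have "(\<lambda>x. indicator {0<..<1} x *\<^sub>R v x) \<in> borel_measurable lborel"
      using v unfolding inH_def set_borel_measurable_def by simp
    ultimately have "(\<lambda>x. ebasis k x * (indicator {0<..<1} x *\<^sub>R v x)) \<in> borel_measurable lborel"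
      by measurable
    then show "set_borel_measurable lborel {0<..<1} (\<lambda>x. ebasis k x * v x)"
      unfolding set_borel_measurable_def by (simp add: mult.left_commute)
    show "AE x in lborel. x \<in> {0<..<1} \<longrightarrow> norm (ebasis k x * v x) \<le> norm (sqrt 2 * (1 + (v x)^2))"
    proof (intro AE_I2 impI)
      fix x
      have "\<bar>v x\<bar> \<le> 1 + (v x)^2"
      proof (cases "\<bar>v x\<bar> \<le> 1")
        case False
        then have "\<bar>v x\<bar> * 1 \<le> \<bar>v x\<bar> * \<bar>v x\<bar>"
          by (intro mult_left_mono) auto
        then show ?thesis
          by (simp add: power2_eq_square abs_mult_self_eq)
      qed (simp add: add_increasing2)
      then show "norm (ebasis k x * v x) \<le> norm (sqrt 2 * (1 + (v x)^2))"
        unfolding real_norm_def abs_mult using abs_ebasis_le[of k x] by (intro mult_mono) auto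
    qed
  qed
qed

lemma coef_diff:
  assumes "inH f" "inH g"
  shows "coef k (\<lambda>x. f x - g x) = coef k f - coef k g"
  unfolding coef_def right_diff_distrib
  using inH_coef_integrable[OF assms(1)] inH_coef_integrable[OF assms(2)] by (rule set_integral_diff(2))

text \<open>Stochastic integral coordinates are unique up to null sets, so \<open>Ont\<close> is a version of
  the projection \<open>P\<^sub>n Ot\<close>.\<close>

lemma coef_diff_projection_AE:
  assumes Ot: "\<And>\<omega>. \<omega> \<in> space M \<Longrightarrow> inH (Ot \<omega>)" and Ont: "\<And>\<omega>. \<omega> \<in> space M \<Longrightarrow> inPnH n (Ont \<omega>)"
    and ZO: "\<And>k. is_stoch_int_coord M W (phi k) t (ZO k)" "\<And>k. AE \<omega> in M. coef k (Ot \<omega>) = ZO k \<omega>"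
    and Ont_eq: "\<And>k. \<exists>Z. is_stoch_int_coord M W (\<lambda>s j. if \<bar>k\<bar> \<le> int n then phi k s j else 0) t Z
                        \<and> (AE \<omega> in M. coef k (Ont \<omega>) = Z \<omega>)"
  shows "AE \<omega> in M. \<forall>k. coef k (\<lambda>x. Ot \<omega> x - Ont \<omega> x) = (if \<bar>k\<bar> > int n then ZO k \<omega> else 0)"
proof (subst AE_all_countable, intro allI)
  fix k
  have diff: "AE \<omega> in M. coef k (\<lambda>x. Ot \<omega> x - Ont \<omega> x) = coef k (Ot \<omega>) - coef k (Ont \<omega>)"
    using Ot Ont unfolding inPnH_def by (intro AE_I2 coef_diff) auto
  obtain Z where Z: "is_stoch_int_coord M W (\<lambda>s j. if \<bar>k\<bar> \<le> int n then phi k s j else 0) t Z"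
    and On_Z: "AE \<omega> in M. coef k (Ont \<omega>) = Z \<omega>"
    using Ont_eq by blast
  show "AE \<omega> in M. coef k (\<lambda>x. Ot \<omega> x - Ont \<omega> x) = (if \<bar>k\<bar> > int n then ZO k \<omega> else 0)"
  proof (cases "\<bar>k\<bar> > int n")
    case True
    have "AE \<omega> in M. coef k (Ont \<omega>) = 0"
      using Ont True unfolding inPnH_def by (intro AE_I2) auto
    then show ?thesis
      using diff ZO(2)[of k] by eventually_elim (use True in simp)
  next
    case False
    then have "AE \<omega> in M. ZO k \<omega> = Z \<omega>"
      using is_stoch_int_coord_unique[OF ZO(1)] Z by simp
    then show ?thesis
      using diff ZO(2)[of k] On_Z by eventually_elim (use False in simp)
  qed
qed

lemma Lp_norm_le_of_coef_moments:
  assumes p: "p \<ge> 2"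
    and coef: "AE \<omega> in M. \<forall>k. coef k (Z \<omega>) = d k \<omega>" and d: "\<And>k. d k \<in> borel_measurable M"
    and s: "\<And>k. s k \<ge> 0" "s summable_on UNIV"
    and moment: "\<And>k. (\<integral>\<^sup>+\<omega>. ennreal ((lam \<eta> k powr (2*\<rho>) * (d k \<omega>)^2) powr (p/2)) \<partial>M)
                      \<le> ennreal (s k powr (p/2))"
  shows "Lp_norm M p \<eta> \<rho> Z \<le> ennreal (sqrt (\<Sum>\<^sub>\<infinity>k. s k))"
proof -
  define a where "a = (\<lambda>k \<omega>. lam \<eta> k powr (2*\<rho>) * (d k \<omega>)^2)"
  define I where "I = (\<integral>\<^sup>+\<omega>. ennreal (Hr_norm \<eta> \<rho> (Z \<omega>) powr p) \<partial>M)"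
  have "I = (\<integral>\<^sup>+\<omega>. ennreal ((\<Sum>\<^sub>\<infinity>k. a k \<omega>) powr (p/2)) \<partial>M)"
    unfolding I_def using coef
    by (intro nn_integral_cong_AE) (auto simp: Hr_norm_def a_def powr_half_sqrt[symmetric]
        infsum_nonneg powr_powr elim!: AE_mp)
  also have "\<dots> \<le> ennreal ((\<Sum>\<^sub>\<infinity>k. s k) powr (p/2))"
    using p s moment d unfolding a_def by (intro nn_integral_powr_infsum_le) auto
  finally have I: "I \<le> ennreal ((\<Sum>\<^sub>\<infinity>k. s k) powr (p/2))" .
  then have "Lp_norm M p \<eta> \<rho> Z = ennreal (enn2real I powr (1/p))"
    unfolding Lp_norm_def Let_def I_def[symmetric] by (auto simp: top_unique)
  also have "\<dots> \<le> ennreal (((\<Sum>\<^sub>\<infinity>k. s k) powr (p/2)) powr (1/p))"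
    using I p by (intro ennreal_leI powr_mono2 enn2real_leI) auto
  also have "((\<Sum>\<^sub>\<infinity>k. s k) powr (p/2)) powr (1/p) = sqrt (\<Sum>\<^sub>\<infinity>k. s k)"
    using p s by (simp add: powr_powr infsum_nonneg flip: powr_half_sqrt)
  finally show ?thesis .
qed

definition tail_variance :: "real \<Rightarrow> real \<Rightarrow> (int \<Rightarrow> real) \<Rightarrow> (int \<Rightarrow> real) \<Rightarrow> nat \<Rightarrow> real \<Rightarrow> int \<Rightarrow> real"
  where "tail_variance \<eta> \<rho> b bt n t k =
    (if \<bar>k\<bar> > int n then lam \<eta> k powr (2*\<rho>) * coord_variance \<eta> b bt t k else 0)"

lemma tail_variance_le:
  fixes \<beta> \<rho> \<epsilon> :: real and n :: nat
  defines "\<gamma> \<equiv> \<beta> - 2*\<rho> - 2*\<epsilon>"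
  assumes eta: "\<eta> > 0" and n: "n \<ge> 1" and t: "0 \<le> t" "t \<le> T"
    and \<gamma>: "0 < \<gamma>" "\<gamma> \<le> 1" and \<epsilon>: "\<epsilon> \<ge> 0"
  shows "tail_variance \<eta> \<rho> b bt n t k
           \<le> (real n powr (-4*\<epsilon>))^2 * (T powr \<gamma> / \<gamma>) * (((b k)^2 + (bt k)^2) * lam \<eta> k powr (\<beta> - 1))"
proof (cases "\<bar>k\<bar> > int n")
  case True
  have "real_of_int (int n) \<le> real_of_int \<bar>k\<bar>"
    using True by (simp only: of_int_le_iff)
  then have "real n ^ 4 \<le> \<bar>real_of_int k\<bar> ^ 4"
    by (intro power_mono) auto
  then have "real n ^ 4 \<le> (real_of_int k)^4"
    by (simp add: power_abs)
  then have "lam \<eta> k \<ge> real n ^ 4"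
    using lam_ge_power4[OF eta, of k] by linarith
  from tail_coord_variance_le[OF this n t \<gamma>[unfolded \<gamma>_def] \<epsilon>]
  have "((b k)^2 + (bt k)^2) * (lam \<eta> k powr (2*\<rho>) * ((1 - exp (-2 * lam \<eta> k * t)) / (2 * lam \<eta> k)))
      \<le> ((b k)^2 + (bt k)^2) * (lam \<eta> k powr (\<beta> - 1) * (real n powr (-4*\<epsilon>))^2 * (T powr \<gamma> / \<gamma>))"
    unfolding \<gamma>_def by (intro mult_left_mono) auto
  then show ?thesis
    using True unfolding tail_variance_def coord_variance_def by (simp add: mult_ac)
qed (use \<gamma> in \<open>simp add: tail_variance_def\<close>)

lemma tail_variance_nonneg: "\<eta> > 0 \<Longrightarrow> t \<ge> 0 \<Longrightarrow> tail_variance \<eta> \<rho> b bt n t k \<ge> 0"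
  unfolding tail_variance_def by (simp add: coord_variance_nonneg)

lemma tail_variance_infsum_le:
  fixes \<beta> \<rho> \<epsilon> :: real and n :: nat
  defines "\<gamma> \<equiv> \<beta> - 2*\<rho> - 2*\<epsilon>"
  assumes eta: "\<eta> > 0" and beta: "\<beta> \<le> 1"
    and bsum: "(\<lambda>m. ((b m)\<^sup>2 + (bt m)\<^sup>2) * \<bar>real_of_int m\<bar> powr (4*\<beta> - 4)) summable_on (UNIV - {0})"
    and n: "n \<ge> 1" and t: "0 \<le> t" "t \<le> T" and \<gamma>: "0 < \<gamma>" "\<gamma> \<le> 1" and \<epsilon>: "\<epsilon> \<ge> 0"
  shows "tail_variance \<eta> \<rho> b bt n t summable_on UNIV"
    and "(\<Sum>\<^sub>\<infinity>k. tail_variance \<eta> \<rho> b bt n t k)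
           \<le> (real n powr (-4*\<epsilon>))^2 * (T powr \<gamma> / \<gamma>) * (HS_norm_B \<eta> ((\<beta> - 1)/2) b bt)^2"
proof -
  define C where "C = (real n powr (-4*\<epsilon>))^2 * (T powr \<gamma> / \<gamma>)"
  define w where "w = (\<lambda>k. ((b k)^2 + (bt k)^2) * lam \<eta> k powr (\<beta> - 1))"
  have C: "C \<ge> 0"
    unfolding C_def using \<gamma> by simp
  have le: "tail_variance \<eta> \<rho> b bt n t k \<le> C * w k" for k
    unfolding C_def w_def \<gamma>_def using tail_variance_le[OF eta n t \<gamma>[unfolded \<gamma>_def] \<epsilon>] by simp
  have w: "(\<lambda>k. C * w k) summable_on UNIV - {0}"
    unfolding w_def by (intro summable_on_cmult_right HS_weights_summable eta beta bsum)
  have summable0: "tail_variance \<eta> \<rho> b bt n t summable_on UNIV - {0}"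
    using le tail_variance_nonneg[OF eta t(1)] by (intro summable_on_comparison_test[OF w])
  then show "tail_variance \<eta> \<rho> b bt n t summable_on UNIV"
    by (metis insert_Diff_single insert_UNIV summable_on_insert_iff)
  have "(\<Sum>\<^sub>\<infinity>k. tail_variance \<eta> \<rho> b bt n t k) = (\<Sum>\<^sub>\<infinity>k\<in>UNIV - {0}. tail_variance \<eta> \<rho> b bt n t k)"
    by (intro infsum_cong_neutral) (auto simp: tail_variance_def)
  also have "\<dots> \<le> (\<Sum>\<^sub>\<infinity>k\<in>UNIV - {0}. C * w k)"
    using le by (intro infsum_mono summable0 w)
  also have "\<dots> = C * (\<Sum>\<^sub>\<infinity>k\<in>UNIV - {0}. w k)"
    by (rule infsum_cmult_right') 
  also have "\<dots> \<le> C * (HS_norm_B \<eta> ((\<beta> - 1)/2) b bt)^2"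
    unfolding w_def using C HS_weights_infsum_le[OF HS_weights_summable[OF eta beta bsum]]
    by (intro mult_left_mono) simp_all
  finally show "(\<Sum>\<^sub>\<infinity>k. tail_variance \<eta> \<rho> b bt n t k)
      \<le> (real n powr (-4*\<epsilon>))^2 * (T powr \<gamma> / \<gamma>) * (HS_norm_B \<eta> ((\<beta> - 1)/2) b bt)^2"
    unfolding C_def .
qed

lemma Lp_norm_projection_error_le:
  assumes P: "prob_space M" and filt: "normal_filtration M T F" and wiener: "cyl_wiener M T F W"
    and t: "t \<in> {0..T}" and p: "p \<ge> 2" and eta: "\<eta> > 0"
    and Ot: "\<And>\<omega>. \<omega> \<in> space M \<Longrightarrow> inH (Ot \<omega>)" and Ont: "\<And>\<omega>. \<omega> \<in> space M \<Longrightarrow> inPnH n (Ont \<omega>)"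
    and Ot_eq: "\<And>k. \<exists>Z. is_stoch_int_coord M W (\<lambda>s j. exp (- lam \<eta> k * (t - s)) * Bmat b bt k j) t Z
                      \<and> (AE \<omega> in M. coef k (Ot \<omega>) = Z \<omega>)"
    and Ont_eq: "\<And>k. \<exists>Z. is_stoch_int_coord M W
                         (\<lambda>s j. if \<bar>k\<bar> \<le> int n then exp (- lam \<eta> k * (t - s)) * Bmat b bt k j else 0) t Z
                       \<and> (AE \<omega> in M. coef k (Ont \<omega>) = Z \<omega>)"
    and summable: "tail_variance \<eta> \<rho> b bt n t summable_on UNIV"
  shows "Lp_norm M p \<eta> \<rho> (\<lambda>\<omega> x. Ot \<omega> x - Ont \<omega> x)
           \<le> ennreal (sqrt (p*(p-1)/2 * (\<Sum>\<^sub>\<infinity>k. tail_variance \<eta> \<rho> b bt n t k)))"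
proof -
  have "\<forall>k. \<exists>Z. is_stoch_int_coord M W (\<lambda>s j. exp (- lam \<eta> k * (t - s)) * Bmat b bt k j) t Z
      \<and> (AE \<omega> in M. coef k (Ot \<omega>) = Z \<omega>)"
    using Ot_eq by blast
  from choice[OF this] obtain ZO
    where ZO: "\<And>k. is_stoch_int_coord M W (\<lambda>s j. exp (- lam \<eta> k * (t - s)) * Bmat b bt k j) t (ZO k)"
      "\<And>k. AE \<omega> in M. coef k (Ot \<omega>) = ZO k \<omega>"
    by blast
  define c where "c = p*(p-1)/2"
  have c: "c \<ge> 0"
    unfolding c_def using p by simp
  have "Lp_norm M p \<eta> \<rho> (\<lambda>\<omega> x. Ot \<omega> x - Ont \<omega> x) \<le> ennreal (sqrt (\<Sum>\<^sub>\<infinity>k. c * tail_variance \<eta> \<rho> b bt n t k))"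
  proof (rule Lp_norm_le_of_coef_moments[OF p])
    show "AE \<omega> in M. \<forall>k. coef k (\<lambda>x. Ot \<omega> x - Ont \<omega> x) = (if \<bar>k\<bar> > int n then ZO k \<omega> else 0)"
      by (rule coef_diff_projection_AE[where phi="\<lambda>k s j. exp (- lam \<eta> k * (t - s)) * Bmat b bt k j"])
        (fact Ot Ont ZO Ont_eq)+
    show "(\<lambda>\<omega>. if \<bar>k\<bar> > int n then ZO k \<omega> else 0) \<in> borel_measurable M" for k
      using ZO(1)[of k] unfolding is_stoch_int_coord_def by (cases "\<bar>k\<bar> > int n") simp_all
    show "c * tail_variance \<eta> \<rho> b bt n t k \<ge> 0" for k
      using c tail_variance_nonneg[OF eta] t by simp
    show "(\<lambda>k. c * tail_variance \<eta> \<rho> b bt n t k) summable_on UNIV"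
      by (rule summable_on_cmult_right[OF summable])
    show "(\<integral>\<^sup>+\<omega>. ennreal ((lam \<eta> k powr (2*\<rho>) * (if \<bar>k\<bar> > int n then ZO k \<omega> else 0)^2) powr (p/2)) \<partial>M)
        \<le> ennreal ((c * tail_variance \<eta> \<rho> b bt n t k) powr (p/2))" for k
    proof (cases "\<bar>k\<bar> > int n")
      case True
      then show ?thesis
        using is_stoch_int_coord_weighted_moment_le[OF P filt wiener t p eta _ ZO(1)[of k], of \<rho>]
        unfolding tail_variance_def c_def by (simp add: mult.assoc)
    qed (use p in \<open>simp add: tail_variance_def\<close>)
  qed
  also have "(\<Sum>\<^sub>\<infinity>k. c * tail_variance \<eta> \<rho> b bt n t k) = c * (\<Sum>\<^sub>\<infinity>k. tail_variance \<eta> \<rho> b bt n t k)"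
    by (rule infsum_cmult_right')
  finally show ?thesis
    unfolding c_def .
qed

lemma Lp_norm_projection_error_rate:
  fixes \<beta> \<rho> \<epsilon> :: real and n :: nat
  defines "\<gamma> \<equiv> \<beta> - 2*\<rho> - 2*\<epsilon>"
  assumes P: "prob_space M" and filt: "normal_filtration M T F" and wiener: "cyl_wiener M T F W"
    and t: "t \<in> {0..T}" and p: "p \<ge> 2" and eta: "\<eta> > 0" and beta: "\<beta> \<le> 1"
    and bsum: "(\<lambda>m. ((b m)\<^sup>2 + (bt m)\<^sup>2) * \<bar>real_of_int m\<bar> powr (4*\<beta> - 4)) summable_on (UNIV - {0})"
    and n: "n \<ge> 1" and \<gamma>: "0 < \<gamma>" "\<gamma> \<le> 1" and \<epsilon>: "\<epsilon> \<ge> 0"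
    and Ot: "\<And>\<omega>. \<omega> \<in> space M \<Longrightarrow> inH (Ot \<omega>)" and Ont: "\<And>\<omega>. \<omega> \<in> space M \<Longrightarrow> inPnH n (Ont \<omega>)"
    and Ot_eq: "\<And>k. \<exists>Z. is_stoch_int_coord M W (\<lambda>s j. exp (- lam \<eta> k * (t - s)) * Bmat b bt k j) t Z
                      \<and> (AE \<omega> in M. coef k (Ot \<omega>) = Z \<omega>)"
    and Ont_eq: "\<And>k. \<exists>Z. is_stoch_int_coord M W
                         (\<lambda>s j. if \<bar>k\<bar> \<le> int n then exp (- lam \<eta> k * (t - s)) * Bmat b bt k j else 0) t Z
                       \<and> (AE \<omega> in M. coef k (Ont \<omega>) = Z \<omega>)"
  shows "Lp_norm M p \<eta> \<rho> (\<lambda>\<omega> x. Ot \<omega> x - Ont \<omega> x)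
           \<le> ennreal (sqrt (p * (p - 1) * T powr \<gamma> / (2 * \<gamma>))
                      * HS_norm_B \<eta> ((\<beta> - 1)/2) b bt * real n powr (- 4*\<epsilon>))"
proof -
  define HS where "HS = HS_norm_B \<eta> ((\<beta> - 1)/2) b bt"
  have HS: "HS \<ge> 0"
    unfolding HS_def HS_norm_B_def by (intro real_sqrt_ge_zero infsum_nonneg) auto
  have t': "0 \<le> t" "t \<le> T"
    using t by auto
  note tail = tail_variance_infsum_le[OF eta beta bsum n t' \<gamma>[unfolded \<gamma>_def] \<epsilon>]
  have "Lp_norm M p \<eta> \<rho> (\<lambda>\<omega> x. Ot \<omega> x - Ont \<omega> x)
      \<le> ennreal (sqrt (p*(p-1)/2 * (\<Sum>\<^sub>\<infinity>k. tail_variance \<eta> \<rho> b bt n t k)))"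
    using tail(1) by (intro Lp_norm_projection_error_le[OF P filt wiener t p eta Ot Ont Ot_eq Ont_eq])
  also have "\<dots> \<le> ennreal (sqrt (p*(p-1)/2 * ((real n powr (-4*\<epsilon>))^2 * (T powr \<gamma> / \<gamma>) * HS^2)))"
    using tail(2) p unfolding \<gamma>_def HS_def by (intro ennreal_leI real_sqrt_le_mono mult_left_mono) auto
  also have "p*(p-1)/2 * ((real n powr (-4*\<epsilon>))^2 * (T powr \<gamma> / \<gamma>) * HS^2)
      = (p * (p - 1) * T powr \<gamma> / (2 * \<gamma>)) * (HS * real n powr (-4*\<epsilon>))^2"
    by (simp add: power_mult_distrib)
  also have "sqrt \<dots> = sqrt (p * (p - 1) * T powr \<gamma> / (2 * \<gamma>)) * HS * real n powr (-4*\<epsilon>)"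
    using HS by (subst real_sqrt_mult) (simp add: abs_mult)
  finally show ?thesis
    unfolding HS_def by simp
qed

theorem lemma5p9:
  fixes \<beta> T \<eta> \<kappa> \<rho> chi p \<epsilon> :: real
    and b bt :: "int \<Rightarrow> real"
    and \<xi> :: "real \<Rightarrow> real"
    and M :: "'a measure"
    and F :: "real \<Rightarrow> 'a set set"
    and W :: "int \<Rightarrow> real \<Rightarrow> 'a \<Rightarrow> real"
    and h :: "nat \<Rightarrow> real"
    and X On :: "nat \<Rightarrow> real \<Rightarrow> 'a \<Rightarrow> real \<Rightarrow> real"
    and Oproc :: "real \<Rightarrow> 'a \<Rightarrow> real \<Rightarrow> real"
    and n :: nat
  assumes beta: "1/8 < \<beta>" "\<beta> < 1/2"
    and T: "0 < T" and eta: "0 < \<eta>"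
    and rho: "1/16 < \<rho>" "\<rho> < \<beta>/2"
    and chi: "0 < chi" "chi \<le> \<rho>/2 - 1/32"
    and bsum: "(\<lambda>m. ((b m)\<^sup>2 + (bt m)\<^sup>2) * \<bar>real_of_int m\<bar> powr (4*\<beta> - 4)) summable_on (UNIV - {0})"
    and xi: "inHr \<eta> (1/4) \<xi>"
    and P: "prob_space M"
    and filt: "normal_filtration M T F"
    and wiener: "cyl_wiener M T F W"
    and h_pos: "\<And>m. m \<ge> 1 \<Longrightarrow> 0 < h m"
    and h_lim: "limsup (\<lambda>m. ereal (h m)) = 0"
    and X_proc: "\<And>m t. m \<ge> 1 \<Longrightarrow> t \<in> {0..T} \<Longrightarrow>
         (\<forall>\<omega>\<in>space M. inPnH m (X m t \<omega>) \<and> inPnH m (On m t \<omega>)) \<and>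
         (\<forall>k. (\<lambda>\<omega>. coef k (X m t \<omega>)) \<in> borel_measurable M \<and>
              (\<lambda>\<omega>. coef k (On m t \<omega>)) \<in> borel_measurable M)"
    and On_eq: "\<And>m t k. m \<ge> 1 \<Longrightarrow> t \<in> {0..T} \<Longrightarrow>
         \<exists>Z. is_stoch_int_coord M W
               (\<lambda>s j. if \<bar>k\<bar> \<le> int m then exp (- lam \<eta> k * (t - s)) * Bmat b bt k j else 0) t Z
             \<and> (AE \<omega> in M. coef k (On m t \<omega>) = Z \<omega>)"
    and X_eq: "\<And>m t. m \<ge> 1 \<Longrightarrow> t \<in> {0..T} \<Longrightarrow>
         AE \<omega> in M. \<forall>k.
           (let g = (\<lambda>s. exp (- lam \<eta> k * (t - s)) *
                 (if Hr_norm \<eta> \<rho> (X m (grid_floor (h m) s) \<omega>)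
                     + Hr_norm \<eta> \<rho> (\<lambda>x. On m (grid_floor (h m) s) \<omega> x
                                        + Pn_semigroup \<eta> m (grid_floor (h m) s) \<xi> x)
                     \<le> \<bar>h m\<bar> powr (- chi) then 1 else 0) *
                 F_coef \<eta> \<kappa> k (X m (grid_floor (h m) s) \<omega>))
            in (\<bar>k\<bar> \<le> int m \<longrightarrow> set_integrable lborel {0..t} g) \<and>
               coef k (X m t \<omega>) =
                 (if \<bar>k\<bar> \<le> int m
                  then exp (- lam \<eta> k * t) * coef k \<xi> + (LINT s:{0..t}|lborel. g s)
                       + coef k (On m t \<omega>)
                  else 0))"
    and p: "2 \<le> p"
    and n: "1 \<le> n"
    and eps: "0 \<le> \<epsilon>" "\<epsilon> < \<beta>/2 - \<rho>"
    and O_proc: "\<And>t. t \<in> {0..T} \<Longrightarrow>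
         (\<forall>\<omega>\<in>space M. inHr \<eta> \<rho> (Oproc t \<omega>)) \<and>
         (\<forall>k. (\<lambda>\<omega>. coef k (Oproc t \<omega>)) \<in> borel_measurable M)"
    and O_eq: "\<And>t k. t \<in> {0..T} \<Longrightarrow>
         \<exists>Z. is_stoch_int_coord M W (\<lambda>s j. exp (- lam \<eta> k * (t - s)) * Bmat b bt k j) t Z
             \<and> (AE \<omega> in M. coef k (Oproc t \<omega>) = Z \<omega>)"
  shows "(SUP t\<in>{0..T}. Lp_norm M p \<eta> \<rho> (\<lambda>\<omega> x. Oproc t \<omega> x - On n t \<omega> x))
           \<le> ennreal (sqrt (p * (p - 1) * T powr (\<beta> - 2*\<rho> - 2*\<epsilon>) / (2 * (\<beta> - 2*\<rho> - 2*\<epsilon>)))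
                      * HS_norm_B \<eta> ((\<beta> - 1)/2) b bt * real n powr (- 4*\<epsilon>))"
proof (intro SUP_least Lp_norm_projection_error_rate[OF P filt wiener _ p eta _ bsum n])
  fix t
  assume t: "t \<in> {0..T}"
  show "\<beta> \<le> 1" "0 < \<beta> - 2*\<rho> - 2*\<epsilon>" "\<beta> - 2*\<rho> - 2*\<epsilon> \<le> 1" "0 \<le> \<epsilon>"
    using beta rho eps by auto
  show "\<And>\<omega>. \<omega> \<in> space M \<Longrightarrow> inH (Oproc t \<omega>)" "\<And>\<omega>. \<omega> \<in> space M \<Longrightarrow> inPnH n (On n t \<omega>)"
    using O_proc[OF t] X_proc[OF n t] by (auto simp: inHr_def)
qed (use O_eq On_eq n in auto)

end
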